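(* Let $\mathcal{H}$ be a real Hilbert space with inner product $\langle\cdot,\cdot\rangle$ and norm $\|\cdot\|$. Let $\Phi:\mathcal{H}\to\mathbb{R}$ be a convex $C^1$ function such that $\arg\min\Phi=\{v\in\mathcal{H}:\Phi(v)=\Phi^*\}$ is nonempty, where $\Phi^*=\min_{x\in\mathcal{H}}\Phi(x)$. Let $c>0$, $\alpha\in[0,1)$, $\gamma(t)=\frac{c}{(1+t)^\alpha}$, and $g\in L^1(0,+\infty;\mathcal{H})$. Let $x\in W^{2,1}_{loc}(0,+\infty;\mathcal{H})$ be a solution of $$\ddot x(t)+\gamma(t)\dot x(t)+\nabla\Phi(x(t))=g(t),\quad t\ge 0,$$ and let $W(t)=\frac12\|\dot x(t)\|^2+\Phi(x(t))-\Phi^*$. Let $\nu\in[\alpha,\frac{1+\alpha}{2}]$ and assume that $\int_0^{+\infty}(1+t)^\nu\|g(t)\|\,dt<\infty$. Then $W(t)=o\left(\frac{1}{t^{2\nu}}\right)$ as $t\to+\infty$, and $\int_0^{+\infty}(1+t)^{2\nu-\alpha}\|\dot x(t)\|^2\,dt<\infty$.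
   Context: $W^{2,1}_{loc}(0,+\infty;\mathcal{H})$ denotes functions whose first and second (weak) derivatives are locally integrable with values in $\mathcal{H}$; $\dot x,\ddot x$ denote the first and second time derivatives. *)

theory Defs
  imports "HOL-Analysis.Analysis" "HOL-Library.Landau_Symbols"
begin

end

theory Submission
  imports Defs
begin

text \<open>
  Write \<open>y = x - x\<^sub>m\<^sub>i\<^sub>n\<close>, \<open>\<beta> = (1 + t) powr \<nu>\<close> and \<open>v = \<lambda> y + \<beta> x'\<close> with
  \<open>\<lambda> = (2\<nu> + 1) (1 + t) powr (\<nu> - 1)\<close>. The Lyapunov function
  \<open>E = \<beta>\<^sup>2 (\<Phi> x - \<Phi>\<^sup>*) + \<parallel>v\<parallel>\<^sup>2 / 2 + \<xi> \<parallel>y\<parallel>\<^sup>2\<close> satisfies, for large \<open>t\<close>,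
  \<open>E' \<le> - D + K (1 + t) powr (\<alpha> - 2) E + \<beta> \<parallel>v\<parallel> \<parallel>g\<parallel>\<close>, where
  \<open>D = (1 + t) powr (2\<nu> - 1) (\<Phi> x - \<Phi>\<^sup>*) + c/2 (1 + t) powr (2\<nu> - \<alpha>) \<parallel>x'\<parallel>\<^sup>2\<close>.
  As \<open>(1 + t) powr (\<alpha> - 2)\<close> is integrable and \<open>\<parallel>v\<parallel> \<le> \<surd>(2E)\<close>, integrating up to a maximum point
  of \<open>E\<close> yields a quadratic inequality that bounds \<open>E\<close>, hence also \<open>\<integral> D\<close>: this is the
  integrability claim. The scaled energy \<open>U = (1 + t) powr (2\<nu>) W\<close> satisfies
  \<open>U' \<le> K D + C \<beta> \<parallel>g\<parallel>\<close>, so its increments far out are small, while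
  \<open>\<integral> U / (1 + t) \<le> K \<integral> D < \<infinity>\<close> makes it small somewhere beyond every point. Hence \<open>U \<longrightarrow> 0\<close>,
  which is the little-o claim.
\<close>

section \<open>Derivatives up to an integrable perturbation\<close>

definition int_norm :: "(real \<Rightarrow> 'a::real_normed_vector) \<Rightarrow> real \<Rightarrow> real \<Rightarrow> real" where
  "int_norm g s t = integral {s..t} (\<lambda>\<tau>. norm (g \<tau>))"

text \<open>
  This replaces the chain and product rules for the velocity, whose
  derivative \<open>x''\<close> is only integrable; \<open>x'\<close> satisfies it with the continuous part of \<open>x''\<close>.
\<close>

definition perturbed_deriv :: "(real \<Rightarrow> 'a::real_normed_vector) \<Rightarrow> (real \<Rightarrow> 'b::real_normed_vector)
    \<Rightarrow> (real \<Rightarrow> 'b) \<Rightarrow> (real \<Rightarrow> real) \<Rightarrow> real \<Rightarrow> real \<Rightarrow> bool" where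
  "perturbed_deriv g f f' b a c \<longleftrightarrow> (\<forall>e>0. \<exists>d>0. \<forall>s t. a \<le> s \<longrightarrow> s \<le> t \<longrightarrow> t \<le> c \<longrightarrow> t - s < d \<longrightarrow>
      norm (f t - f s - (t - s) *\<^sub>R f' s) \<le> b s * int_norm g s t + e * ((t - s) + int_norm g s t))"

definition perturbed_upper_deriv :: "(real \<Rightarrow> 'a::real_normed_vector) \<Rightarrow> (real \<Rightarrow> real)
    \<Rightarrow> (real \<Rightarrow> real) \<Rightarrow> (real \<Rightarrow> real) \<Rightarrow> real \<Rightarrow> real \<Rightarrow> bool" where
  "perturbed_upper_deriv g f f' b a c \<longleftrightarrow> (\<forall>e>0. \<exists>d>0. \<forall>s t. a \<le> s \<longrightarrow> s \<le> t \<longrightarrow> t \<le> c \<longrightarrow> t - s < d \<longrightarrow>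
      f t - f s - (t - s) * f' s \<le> b s * int_norm g s t + e * ((t - s) + int_norm g s t))"

lemma int_norm_nonneg:
  assumes "(\<lambda>\<tau>. norm (g \<tau>)) integrable_on {a..c}" "a \<le> s" "s \<le> t" "t \<le> c"
  shows "0 \<le> int_norm g s t"
  unfolding int_norm_def
  by (rule integral_nonneg) (use assms integrable_on_subinterval[OF assms(1), of s t] in auto)

lemma int_norm_combine:
  assumes "(\<lambda>\<tau>. norm (g \<tau>)) integrable_on {a..c}" "a \<le> s" "s \<le> u" "u \<le> t" "t \<le> c"
  shows "int_norm g s u + int_norm g u t = int_norm g s t"
  unfolding int_norm_def
  by (rule Henstock_Kurzweil_Integration.integral_combine)
     (use assms integrable_on_subinterval[OF assms(1), of s t] in auto)

lemma uniformly_continuous_on_interval_delta: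
  fixes f :: "real \<Rightarrow> 'b::real_normed_vector"
  assumes "continuous_on {a..c} f" "e > 0"
  obtains d where "d > 0" "\<And>s t. s \<in> {a..c} \<Longrightarrow> t \<in> {a..c} \<Longrightarrow> \<bar>t - s\<bar> < d \<Longrightarrow> norm (f t - f s) < e"
proof -
  have "uniformly_continuous_on {a..c} f"
    using assms(1) by (intro compact_uniformly_continuous) auto
  then show ?thesis
    using assms(2) that unfolding uniformly_continuous_on_def by (metis dist_norm dist_real_def)
qed

lemma continuous_on_interval_bound:
  fixes f :: "real \<Rightarrow> 'b::real_normed_vector"
  assumes "continuous_on {a..c} f"
  obtains B where "B > 0" "\<And>t. t \<in> {a..c} \<Longrightarrow> norm (f t) \<le> B"
proof -
  have "bounded (f ` {a..c})"
    using assms by (intro compact_imp_bounded compact_continuous_image) auto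
  then show ?thesis using that by (auto simp: bounded_pos)
qed

lemma integrable_continuous_mult_norm:
  fixes k :: "real \<Rightarrow> real"
  assumes k: "continuous_on {a..c} k" and g: "(\<lambda>\<tau>. norm (g \<tau>)) integrable_on {a..c}"
  shows "(\<lambda>\<tau>. k \<tau> * norm (g \<tau>)) integrable_on {a..c}"
proof -
  have "(\<lambda>\<tau>. k \<tau> * norm (g \<tau>)) absolutely_integrable_on {a..c}"
  proof (rule absolutely_integrable_bounded_measurable_product_real)
    show "k \<in> borel_measurable (lebesgue_on {a..c})"
      using k by (intro continuous_imp_measurable_on_sets_lebesgue) auto
    show "bounded (k ` {a..c})"
      using k by (intro compact_imp_bounded compact_continuous_image) auto
    show "(\<lambda>\<tau>. norm (g \<tau>)) absolutely_integrable_on {a..c}"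
      using g by (intro nonnegative_absolutely_integrable_1) auto
  qed auto
  then show ?thesis using set_lebesgue_integral_eq_integral(1) by blast
qed

lemma increment_le_of_small_increments:
  fixes \<psi> M :: "real \<Rightarrow> real"
  assumes "a \<le> c" "d > 0"
    and small: "\<And>s t. a \<le> s \<Longrightarrow> s \<le> t \<Longrightarrow> t \<le> c \<Longrightarrow> t - s < d \<Longrightarrow> \<psi> t - \<psi> s \<le> e * (M t - M s)"
  shows "\<psi> c - \<psi> a \<le> e * (M c - M a)"
proof -
  obtain n :: nat where n: "(c - a) / d < real n" using reals_Archimedean2 by blast
  with \<open>d > 0\<close> \<open>a \<le> c\<close> have "n > 0" by (cases n) (auto simp: divide_less_0_iff)
  define p where "p k = a + real k * (c - a) / real n" for k :: nat
  have p0: "p 0 = a" and pn: "p n = c" using \<open>n > 0\<close> by (auto simp: p_def)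
  have step: "p (Suc k) - p k = (c - a) / real n" for k
    using \<open>n > 0\<close> by (simp add: p_def field_simps)
  have step_small: "(c - a) / real n < d"
    using n \<open>n > 0\<close> \<open>d > 0\<close> by (simp add: field_simps)
  have p_ge: "a \<le> p k" for k using \<open>a \<le> c\<close> by (simp add: p_def)
  have p_mono: "p k \<le> p (Suc k)" for k
    using step \<open>a \<le> c\<close> by (metis diff_ge_0_iff_ge divide_nonneg_nonneg of_nat_0_le_iff)
  have p_le: "p k \<le> c" if "k \<le> n" for k
  proof -
    have "real k * (c - a) / real n \<le> real n * (c - a) / real n"
      using that \<open>a \<le> c\<close> by (intro divide_right_mono mult_right_mono) auto
    then show ?thesis using \<open>n > 0\<close> by (simp add: p_def)
  qed
  have "\<psi> c - \<psi> a = (\<Sum>k<n. \<psi> (p (Suc k)) - \<psi> (p k))"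
    using sum_lessThan_telescope[of "\<lambda>k. \<psi> (p k)" n] p0 pn by simp
  also have "\<dots> \<le> (\<Sum>k<n. e * (M (p (Suc k)) - M (p k)))"
  proof (rule sum_mono)
    fix k assume "k \<in> {..<n}"
    then show "\<psi> (p (Suc k)) - \<psi> (p k) \<le> e * (M (p (Suc k)) - M (p k))"
      using small p_ge p_mono p_le[of "Suc k"] step step_small by auto
  qed
  also have "\<dots> = e * (M c - M a)"
    using sum_lessThan_telescope[of "\<lambda>k. M (p k)" n] p0 pn by (simp add: sum_distrib_left[symmetric])
  finally show ?thesis .
qed

lemma le_of_small_increments:
  fixes \<psi> M :: "real \<Rightarrow> real"
  assumes "a \<le> c"
    and M: "\<And>s t. a \<le> s \<Longrightarrow> s \<le> t \<Longrightarrow> t \<le> c \<Longrightarrow> M s \<le> M t"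
    and small: "\<And>e. e > 0 \<Longrightarrow> \<exists>d>0. \<forall>s t. a \<le> s \<longrightarrow> s \<le> t \<longrightarrow> t \<le> c \<longrightarrow> t - s < d \<longrightarrow>
                  \<psi> t - \<psi> s \<le> e * (M t - M s)"
  shows "\<psi> c \<le> \<psi> a"
proof -
  have "M a \<le> M c" using M[of a c] \<open>a \<le> c\<close> by simp
  have "\<psi> c - \<psi> a \<le> e" if "e > 0" for e
  proof -
    define e' where "e' = e / (M c - M a + 1)"
    have "e' > 0" using that \<open>M a \<le> M c\<close> by (simp add: e'_def)
    then obtain d where "d > 0" and "\<forall>s t. a \<le> s \<longrightarrow> s \<le> t \<longrightarrow> t \<le> c \<longrightarrow> t - s < d \<longrightarrow>
        \<psi> t - \<psi> s \<le> e' * (M t - M s)"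
      using small by blast
    then have "\<psi> c - \<psi> a \<le> e' * (M c - M a)"
      using increment_le_of_small_increments[OF \<open>a \<le> c\<close> \<open>d > 0\<close>] by blast
    also have "\<dots> \<le> e" using that \<open>M a \<le> M c\<close> by (simp add: e'_def field_simps)
    finally show ?thesis .
  qed
  then show ?thesis by (metis field_le_epsilon add_0 diff_le_0_iff_le)
qed

lemma integral_ge_left_value_mult:
  fixes k w :: "real \<Rightarrow> real"
  assumes k: "continuous_on {a..c} k" and w: "w integrable_on {a..c}" "\<And>\<tau>. \<tau> \<in> {a..c} \<Longrightarrow> 0 \<le> w \<tau>"
    and kw: "(\<lambda>\<tau>. k \<tau> * w \<tau>) integrable_on {a..c}" and e: "e > 0"
  obtains d where "d > 0" "\<And>s t. a \<le> s \<Longrightarrow> s \<le> t \<Longrightarrow> t \<le> c \<Longrightarrow> t - s < d \<Longrightarrow>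
      (k s - e) * integral {s..t} w \<le> integral {s..t} (\<lambda>\<tau>. k \<tau> * w \<tau>)"
proof -
  obtain d where d: "d > 0"
    and osc: "\<And>s t. s \<in> {a..c} \<Longrightarrow> t \<in> {a..c} \<Longrightarrow> \<bar>t - s\<bar> < d \<Longrightarrow> norm (k t - k s) < e"
    using uniformly_continuous_on_interval_delta[OF k e] by blast
  have "(k s - e) * integral {s..t} w \<le> integral {s..t} (\<lambda>\<tau>. k \<tau> * w \<tau>)"
    if st: "a \<le> s" "s \<le> t" "t \<le> c" "t - s < d" for s t
  proof -
    have sub: "{s..t} \<subseteq> {a..c}" using st by auto
    have "integral {s..t} (\<lambda>\<tau>. (k s - e) * w \<tau>) \<le> integral {s..t} (\<lambda>\<tau>. k \<tau> * w \<tau>)"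
    proof (rule integral_le)
      show "(\<lambda>\<tau>. (k s - e) * w \<tau>) integrable_on {s..t}"
        using integrable_cmul[OF integrable_on_subinterval[OF w(1) sub], of "k s - e"] by simp
      show "(\<lambda>\<tau>. k \<tau> * w \<tau>) integrable_on {s..t}" using integrable_on_subinterval[OF kw sub] .
      fix \<tau> assume "\<tau> \<in> {s..t}"
      then have "k s - e \<le> k \<tau>" "0 \<le> w \<tau>" using osc[of s \<tau>] w(2) st by auto
      then show "(k s - e) * w \<tau> \<le> k \<tau> * w \<tau>" by (rule mult_right_mono)
    qed
    then show ?thesis by simp
  qed
  with d that show ?thesis by blast
qed

lemma perturbed_upper_deriv_small_remainder:
  assumes L: "perturbed_upper_deriv g f f' k a c"
    and f': "continuous_on {a..c} f'" and k: "continuous_on {a..c} k"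
    and g: "(\<lambda>\<tau>. norm (g \<tau>)) integrable_on {a..c}" and "e > 0"
  obtains d where "d > 0" "\<And>s t. a \<le> s \<Longrightarrow> s \<le> t \<Longrightarrow> t \<le> c \<Longrightarrow> t - s < d \<Longrightarrow>
      f t - f s - integral {s..t} f' - integral {s..t} (\<lambda>\<tau>. k \<tau> * norm (g \<tau>))
        \<le> e * ((t - s) + int_norm g s t)"
proof -
  have e3: "e / 3 > 0" using \<open>e > 0\<close> by simp
  obtain d1 where "d1 > 0" and d1: "\<forall>s t. a \<le> s \<longrightarrow> s \<le> t \<longrightarrow> t \<le> c \<longrightarrow> t - s < d1 \<longrightarrow>
      f t - f s - (t - s) * f' s \<le> k s * int_norm g s t + e / 3 * ((t - s) + int_norm g s t)"
    using L e3 unfolding perturbed_upper_deriv_def by blast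
  obtain d2 where "d2 > 0" and d2: "\<And>s t. a \<le> s \<Longrightarrow> s \<le> t \<Longrightarrow> t \<le> c \<Longrightarrow> t - s < d2 \<Longrightarrow>
      (f' s - e / 3) * integral {s..t} (\<lambda>_. 1) \<le> integral {s..t} (\<lambda>\<tau>. f' \<tau> * 1)"
    using integral_ge_left_value_mult[OF f' integrable_const_ivl[of "1::real"] _ _ e3]
      integrable_continuous_real[OF f'] by auto
  obtain d3 where "d3 > 0" and d3: "\<And>s t. a \<le> s \<Longrightarrow> s \<le> t \<Longrightarrow> t \<le> c \<Longrightarrow> t - s < d3 \<Longrightarrow>
      (k s - e / 3) * int_norm g s t \<le> integral {s..t} (\<lambda>\<tau>. k \<tau> * norm (g \<tau>))"
    using integral_ge_left_value_mult[OF k g _ _ e3] integrable_continuous_mult_norm[OF k g]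
    unfolding int_norm_def by auto
  have "f t - f s - integral {s..t} f' - integral {s..t} (\<lambda>\<tau>. k \<tau> * norm (g \<tau>))
      \<le> e * ((t - s) + int_norm g s t)"
    if st: "a \<le> s" "s \<le> t" "t \<le> c" and small: "t - s < min d1 (min d2 d3)" for s t
  proof -
    have "0 \<le> int_norm g s t" using int_norm_nonneg[OF g st] .
    have "(t - s) * (f' s - e / 3) \<le> integral {s..t} f'"
      using d2[OF st] small st by (simp add: mult.commute)
    moreover have "(k s - e / 3) * int_norm g s t \<le> integral {s..t} (\<lambda>\<tau>. k \<tau> * norm (g \<tau>))"
      using d3[OF st] small by simp
    moreover have "f t - f s - (t - s) * f' s \<le> k s * int_norm g s t + e / 3 * ((t - s) + int_norm g s t)"
      using d1 st small by simp
    moreover have "2 / 3 * e * ((t - s) + int_norm g s t) \<le> e * ((t - s) + int_norm g s t)"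
      using \<open>0 \<le> int_norm g s t\<close> st \<open>e > 0\<close> by (intro mult_right_mono) auto
    ultimately show ?thesis by (simp add: field_simps)
  qed
  moreover have "min d1 (min d2 d3) > 0" using \<open>d1 > 0\<close> \<open>d2 > 0\<close> \<open>d3 > 0\<close> by simp
  ultimately show ?thesis using that by blast
qed

lemma perturbed_upper_deriv_integral_le:
  assumes L: "perturbed_upper_deriv g f f' k a c" and "a \<le> c"
    and f': "continuous_on {a..c} f'" and k: "continuous_on {a..c} k"
    and g: "(\<lambda>\<tau>. norm (g \<tau>)) integrable_on {a..c}"
  shows "f c - f a \<le> integral {a..c} f' + integral {a..c} (\<lambda>\<tau>. k \<tau> * norm (g \<tau>))"
proof -
  define kg where "kg \<tau> = k \<tau> * norm (g \<tau>)" for \<tau>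
  define \<psi> where "\<psi> t = f t - integral {a..t} f' - integral {a..t} kg" for t
  define M where "M t = t + int_norm g a t" for t
  have split: "integral {a..t} h = integral {a..s} h + integral {s..t} h"
    if "h integrable_on {a..c}" "a \<le> s" "s \<le> t" "t \<le> c" for h :: "real \<Rightarrow> real" and s t
    using Henstock_Kurzweil_Integration.integral_combine[of a s t h]
      integrable_on_subinterval[OF that(1), of a t] that
    by auto
  have kg: "kg integrable_on {a..c}" unfolding kg_def by (rule integrable_continuous_mult_norm[OF k g])
  have "\<psi> c \<le> \<psi> a"
  proof (rule le_of_small_increments[OF \<open>a \<le> c\<close>])
    show "M s \<le> M t" if "a \<le> s" "s \<le> t" "t \<le> c" for s t
      using int_norm_combine[OF g, of a s t] int_norm_nonneg[OF g that] that by (simp add: M_def)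
  next
    fix e :: real assume "e > 0"
    obtain d where "d > 0" and d: "\<And>s t. a \<le> s \<Longrightarrow> s \<le> t \<Longrightarrow> t \<le> c \<Longrightarrow> t - s < d \<Longrightarrow>
        f t - f s - integral {s..t} f' - integral {s..t} kg \<le> e * ((t - s) + int_norm g s t)"
      using perturbed_upper_deriv_small_remainder[OF L f' k g \<open>e > 0\<close>] unfolding kg_def by blast
    have "\<psi> t - \<psi> s \<le> e * (M t - M s)" if st: "a \<le> s" "s \<le> t" "t \<le> c" "t - s < d" for s t
    proof -
      have "M t - M s = (t - s) + int_norm g s t"
        using int_norm_combine[OF g, of a s t] st by (simp add: M_def)
      moreover have "\<psi> t - \<psi> s = f t - f s - integral {s..t} f' - integral {s..t} kg"
        using split[OF integrable_continuous_real[OF f'] st(1-3)] split[OF kg st(1-3)] by (simp add: \<psi>_def)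
      ultimately show ?thesis using d[OF st] by simp
    qed
    with \<open>d > 0\<close> show "\<exists>d>0. \<forall>s t. a \<le> s \<longrightarrow> s \<le> t \<longrightarrow> t \<le> c \<longrightarrow> t - s < d \<longrightarrow>
        \<psi> t - \<psi> s \<le> e * (M t - M s)" by blast
  qed
  then show ?thesis unfolding \<psi>_def kg_def by simp
qed

lemma perturbed_deriv_imp_upper:
  fixes f f' :: "real \<Rightarrow> real"
  assumes "perturbed_deriv g f f' b a c"
  shows "perturbed_upper_deriv g f f' b a c"
  unfolding perturbed_upper_deriv_def
proof (intro allI impI)
  fix e :: real assume "e > 0"
  then obtain d where "d > 0" and d: "\<forall>s t. a \<le> s \<longrightarrow> s \<le> t \<longrightarrow> t \<le> c \<longrightarrow> t - s < d \<longrightarrow>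
      norm (f t - f s - (t - s) *\<^sub>R f' s) \<le> b s * int_norm g s t + e * ((t - s) + int_norm g s t)"
    using assms unfolding perturbed_deriv_def by blast
  show "\<exists>d>0. \<forall>s t. a \<le> s \<longrightarrow> s \<le> t \<longrightarrow> t \<le> c \<longrightarrow> t - s < d \<longrightarrow>
      f t - f s - (t - s) * f' s \<le> b s * int_norm g s t + e * ((t - s) + int_norm g s t)"
  proof (intro exI[of _ d] conjI allI impI)
    fix s t assume "a \<le> s" "s \<le> t" "t \<le> c" "t - s < d"
    then have "norm (f t - f s - (t - s) *\<^sub>R f' s) \<le> b s * int_norm g s t + e * ((t - s) + int_norm g s t)"
      using d by blast
    then show "f t - f s - (t - s) * f' s \<le> b s * int_norm g s t + e * ((t - s) + int_norm g s t)"
      by simp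
  qed (rule \<open>d > 0\<close>)
qed

lemma perturbed_upper_deriv_mono:
  assumes L: "perturbed_upper_deriv g f f' b a c"
    and le: "\<And>t. t \<in> {a..c} \<Longrightarrow> f' t \<le> f'' t" "\<And>t. t \<in> {a..c} \<Longrightarrow> b t \<le> b' t"
    and g: "(\<lambda>\<tau>. norm (g \<tau>)) integrable_on {a..c}"
  shows "perturbed_upper_deriv g f f'' b' a c"
  unfolding perturbed_upper_deriv_def
proof (intro allI impI)
  fix e :: real assume "e > 0"
  then obtain d where "d > 0" and d: "\<forall>s t. a \<le> s \<longrightarrow> s \<le> t \<longrightarrow> t \<le> c \<longrightarrow> t - s < d \<longrightarrow>
      f t - f s - (t - s) * f' s \<le> b s * int_norm g s t + e * ((t - s) + int_norm g s t)"
    using L unfolding perturbed_upper_deriv_def by blast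
  show "\<exists>d>0. \<forall>s t. a \<le> s \<longrightarrow> s \<le> t \<longrightarrow> t \<le> c \<longrightarrow> t - s < d \<longrightarrow>
      f t - f s - (t - s) * f'' s \<le> b' s * int_norm g s t + e * ((t - s) + int_norm g s t)"
  proof (intro exI[of _ d] conjI allI impI)
    fix s t assume st: "a \<le> s" "s \<le> t" "t \<le> c" "t - s < d"
    have "(t - s) * f' s \<le> (t - s) * f'' s" using le(1)[of s] st by (intro mult_left_mono) auto
    moreover have "b s * int_norm g s t \<le> b' s * int_norm g s t"
      using le(2)[of s] st int_norm_nonneg[OF g st(1-3)] by (intro mult_right_mono) auto
    ultimately show "f t - f s - (t - s) * f'' s \<le> b' s * int_norm g s t + e * ((t - s) + int_norm g s t)"
      using d st by fastforce
  qed (use \<open>d > 0\<close> in simp)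
qed

lemma perturbed_deriv_cong:
  assumes "perturbed_deriv g f f' b a c"
    and "\<And>t. t \<in> {a..c} \<Longrightarrow> f2 t = f t" "\<And>t. t \<in> {a..c} \<Longrightarrow> f2' t = f' t"
    and "\<And>t. t \<in> {a..c} \<Longrightarrow> b2 t = b t"
  shows "perturbed_deriv g f2 f2' b2 a c"
  unfolding perturbed_deriv_def
proof (intro allI impI)
  fix e :: real assume "e > 0"
  then obtain d where "d > 0" and d: "\<forall>s t. a \<le> s \<longrightarrow> s \<le> t \<longrightarrow> t \<le> c \<longrightarrow> t - s < d \<longrightarrow>
      norm (f t - f s - (t - s) *\<^sub>R f' s) \<le> b s * int_norm g s t + e * ((t - s) + int_norm g s t)"
    using assms(1) unfolding perturbed_deriv_def by blast
  show "\<exists>d>0. \<forall>s t. a \<le> s \<longrightarrow> s \<le> t \<longrightarrow> t \<le> c \<longrightarrow> t - s < d \<longrightarrow>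
      norm (f2 t - f2 s - (t - s) *\<^sub>R f2' s) \<le> b2 s * int_norm g s t + e * ((t - s) + int_norm g s t)"
  proof (intro exI[of _ d] conjI allI impI)
    fix s t assume st: "a \<le> s" "s \<le> t" "t \<le> c" "t - s < d"
    then have "f2 t = f t" "f2 s = f s" "f2' s = f' s" "b2 s = b s" using assms(2-4) by auto
    then show "norm (f2 t - f2 s - (t - s) *\<^sub>R f2' s) \<le> b2 s * int_norm g s t + e * ((t - s) + int_norm g s t)"
      using d st by simp
  qed (rule \<open>d > 0\<close>)
qed

lemma perturbed_deriv_add:
  assumes "perturbed_deriv g f f' b a c" "perturbed_deriv g h h' b' a c"
  shows "perturbed_deriv g (\<lambda>t. f t + h t) (\<lambda>t. f' t + h' t) (\<lambda>t. b t + b' t) a c"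
  unfolding perturbed_deriv_def
proof (intro allI impI)
  fix e :: real assume "e > 0"
  then have "e / 2 > 0" by simp
  then obtain d1 where "d1 > 0"
    and d1: "\<forall>s t. a \<le> s \<longrightarrow> s \<le> t \<longrightarrow> t \<le> c \<longrightarrow> t - s < d1 \<longrightarrow>
      norm (f t - f s - (t - s) *\<^sub>R f' s) \<le> b s * int_norm g s t + e / 2 * ((t - s) + int_norm g s t)"
    using assms(1) unfolding perturbed_deriv_def by blast
  from \<open>e / 2 > 0\<close> obtain d2 where "d2 > 0"
    and d2: "\<forall>s t. a \<le> s \<longrightarrow> s \<le> t \<longrightarrow> t \<le> c \<longrightarrow> t - s < d2 \<longrightarrow>
      norm (h t - h s - (t - s) *\<^sub>R h' s) \<le> b' s * int_norm g s t + e / 2 * ((t - s) + int_norm g s t)"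
    using assms(2) unfolding perturbed_deriv_def by blast
  show "\<exists>d>0. \<forall>s t. a \<le> s \<longrightarrow> s \<le> t \<longrightarrow> t \<le> c \<longrightarrow> t - s < d \<longrightarrow>
      norm (f t + h t - (f s + h s) - (t - s) *\<^sub>R (f' s + h' s))
        \<le> (b s + b' s) * int_norm g s t + e * ((t - s) + int_norm g s t)"
  proof (intro exI[of _ "min d1 d2"] conjI allI impI)
    fix s t assume st: "a \<le> s" "s \<le> t" "t \<le> c" "t - s < min d1 d2"
    have "norm (f t + h t - (f s + h s) - (t - s) *\<^sub>R (f' s + h' s))
        \<le> norm (f t - f s - (t - s) *\<^sub>R f' s) + norm (h t - h s - (t - s) *\<^sub>R h' s)"
      by (rule order_trans[OF _ norm_triangle_ineq]) (simp add: algebra_simps scaleR_right_distrib)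
    also have "\<dots> \<le> (b s * int_norm g s t + e / 2 * ((t - s) + int_norm g s t))
                    + (b' s * int_norm g s t + e / 2 * ((t - s) + int_norm g s t))"
      using d1 d2 st by (intro add_mono) auto
    also have "\<dots> = (b s + b' s) * int_norm g s t + e * ((t - s) + int_norm g s t)"
      by (simp add: algebra_simps)
    finally show "norm (f t + h t - (f s + h s) - (t - s) *\<^sub>R (f' s + h' s))
        \<le> (b s + b' s) * int_norm g s t + e * ((t - s) + int_norm g s t)" .
  qed (use \<open>d1 > 0\<close> \<open>d2 > 0\<close> in simp)
qed

lemma perturbed_deriv_const:
  assumes "(\<lambda>\<tau>. norm (g \<tau>)) integrable_on {a..c}"
  shows "perturbed_deriv g (\<lambda>_. z) (\<lambda>_. 0) (\<lambda>_. 0) a c"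
  unfolding perturbed_deriv_def
proof (intro allI impI exI[of _ 1] conjI)
  fix e :: real and s t assume "e > 0" "a \<le> s" "s \<le> t" "t \<le> c"
  then show "norm (z - z - (t - s) *\<^sub>R 0) \<le> 0 * int_norm g s t + e * ((t - s) + int_norm g s t)"
    using int_norm_nonneg[OF assms] by simp
qed simp

lemma perturbed_deriv_add_const:
  assumes "perturbed_deriv g f f' b a c"
  shows "perturbed_deriv g (\<lambda>t. f t + k) f' b a c"
  using assms unfolding perturbed_deriv_def by simp

text \<open>
  Primitives are used in the weak form \<open>\<integral>\<^sub>s\<^sup>t F \<bullet> e = (f t - f s) \<bullet> e\<close>: the vector-valued
  Henstock-Kurzweil lemmas need the class \<open>banach\<close>, and the sort \<open>{real_inner, complete_space}\<close>
  of the theorem is not known to be a subsort of it.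
\<close>

lemma norm_le_of_inner_has_integral:
  fixes F :: "real \<Rightarrow> 'b::real_inner"
  assumes F: "((\<lambda>\<tau>. F \<tau> \<bullet> D) has_integral (D \<bullet> D)) {s..t}"
    and h: "(h has_integral H) {s..t}" and le: "\<And>\<tau>. \<tau> \<in> {s..t} \<Longrightarrow> norm (F \<tau>) \<le> h \<tau>"
  shows "norm D \<le> H"
proof -
  have "0 \<le> H" using has_integral_nonneg[OF h] le by (meson norm_ge_zero order_trans)
  have "D \<bullet> D \<le> H * norm D"
  proof (rule has_integral_le[OF F has_integral_mult_left[OF h]])
    fix \<tau> assume "\<tau> \<in> {s..t}"
    then show "F \<tau> \<bullet> D \<le> h \<tau> * norm D"
      using norm_cauchy_schwarz[of "F \<tau>" D] le[of \<tau>] by (meson mult_right_mono norm_ge_zero order_trans)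
  qed
  then have "norm D * norm D \<le> H * norm D" by (simp add: power2_norm_eq_inner[symmetric] power2_eq_square)
  then show ?thesis using \<open>0 \<le> H\<close> by (cases "norm D = 0") (auto simp: mult_le_cancel_right)
qed

lemma perturbed_deriv_of_primitive:
  fixes f w p :: "real \<Rightarrow> 'b::real_inner"
  assumes prim: "\<And>e s t. a \<le> s \<Longrightarrow> s \<le> t \<Longrightarrow> t \<le> c \<Longrightarrow>
                   ((\<lambda>\<tau>. (w \<tau> + p \<tau>) \<bullet> e) has_integral ((f t - f s) \<bullet> e)) {s..t}"
    and p: "\<And>\<tau>. \<tau> \<in> {a..c} \<Longrightarrow> norm (p \<tau>) \<le> \<beta> * norm (g \<tau>)"
    and w: "continuous_on {a..c} w"
    and g: "(\<lambda>\<tau>. norm (g \<tau>)) integrable_on {a..c}"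
  shows "perturbed_deriv g f w (\<lambda>_. \<beta>) a c"
  unfolding perturbed_deriv_def
proof (intro allI impI)
  fix e :: real assume "e > 0"
  obtain d where "d > 0" and osc: "\<And>s t. s \<in> {a..c} \<Longrightarrow> t \<in> {a..c} \<Longrightarrow> \<bar>t - s\<bar> < d \<Longrightarrow> norm (w t - w s) < e"
    using uniformly_continuous_on_interval_delta[OF w \<open>e > 0\<close>] by blast
  show "\<exists>d>0. \<forall>s t. a \<le> s \<longrightarrow> s \<le> t \<longrightarrow> t \<le> c \<longrightarrow> t - s < d \<longrightarrow>
      norm (f t - f s - (t - s) *\<^sub>R w s) \<le> \<beta> * int_norm g s t + e * ((t - s) + int_norm g s t)"
  proof (intro exI[of _ d] conjI allI impI)
    fix s t assume st: "a \<le> s" "s \<le> t" "t \<le> c" "t - s < d"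
    define D where "D = f t - f s - (t - s) *\<^sub>R w s"
    have sub: "{s..t} \<subseteq> {a..c}" using st by auto
    have "((\<lambda>\<tau>. (w \<tau> + p \<tau> - w s) \<bullet> D) has_integral (D \<bullet> D)) {s..t}"
      using has_integral_diff[OF prim[OF st(1-3), of D] has_integral_const_real[of "w s \<bullet> D" s t]] st
      by (simp add: D_def inner_diff_left)
    moreover have "((\<lambda>\<tau>. e + \<beta> * norm (g \<tau>)) has_integral (e * (t - s) + \<beta> * int_norm g s t)) {s..t}"
      using has_integral_add[OF has_integral_const_real[of e s t]
          has_integral_mult_right[OF integrable_integral[OF integrable_on_subinterval[OF g sub]]]] st
      by (simp add: int_norm_def algebra_simps)
    moreover have "norm (w \<tau> + p \<tau> - w s) \<le> e + \<beta> * norm (g \<tau>)" if "\<tau> \<in> {s..t}" for \<tau>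
    proof -
      have "norm (w \<tau> - w s) \<le> e" "norm (p \<tau>) \<le> \<beta> * norm (g \<tau>)" using osc[of s \<tau>] p that st by auto
      then show ?thesis using norm_triangle_ineq[of "w \<tau> - w s" "p \<tau>"] by (simp add: algebra_simps)
    qed
    ultimately have "norm D \<le> e * (t - s) + \<beta> * int_norm g s t"
      by (rule norm_le_of_inner_has_integral)
    then show "norm (f t - f s - (t - s) *\<^sub>R w s) \<le> \<beta> * int_norm g s t + e * ((t - s) + int_norm g s t)"
      using mult_nonneg_nonneg[OF less_imp_le[OF \<open>e > 0\<close>] int_norm_nonneg[OF g st(1-3)]]
      by (simp add: D_def algebra_simps)
  qed (use \<open>d > 0\<close> in simp)
qed

lemma perturbed_deriv_of_has_real_derivative:
  fixes f f' :: "real \<Rightarrow> real"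
  assumes "\<And>\<tau>. \<tau> \<in> {a..c} \<Longrightarrow> (f has_real_derivative f' \<tau>) (at \<tau> within {a..c})"
    and "continuous_on {a..c} f'"
    and "(\<lambda>\<tau>. norm (g \<tau>)) integrable_on {a..c}"
  shows "perturbed_deriv g f f' (\<lambda>_. 0) a c"
proof (rule perturbed_deriv_of_primitive[where p = "\<lambda>_. 0"])
  fix e s t assume st: "a \<le> s" "s \<le> t" "t \<le> c"
  have "(f' has_integral (f t - f s)) {s..t}"
  proof (rule fundamental_theorem_of_calculus[OF st(2)])
    fix \<tau> assume "\<tau> \<in> {s..t}"
    then show "(f has_vector_derivative f' \<tau>) (at \<tau> within {s..t})"
      using assms(1)[of \<tau>] st
      by (auto simp: has_real_derivative_iff_has_vector_derivative intro: has_vector_derivative_within_subset)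
  qed
  then show "((\<lambda>\<tau>. (f' \<tau> + 0) \<bullet> e) has_integral ((f t - f s) \<bullet> e)) {s..t}"
    using has_integral_mult_left by simp
qed (use assms(2,3) in auto)

lemma perturbed_deriv_powr:
  fixes K p :: real
  assumes "0 \<le> a" and "(\<lambda>\<tau>. norm (g \<tau>)) integrable_on {a..c}"
  shows "perturbed_deriv g (\<lambda>t. K * (1 + t) powr p) (\<lambda>t. K * (p * (1 + t) powr (p - 1))) (\<lambda>_. 0) a c"
  using assms
  by (intro perturbed_deriv_of_has_real_derivative) (auto intro!: derivative_eq_intros continuous_intros)

lemma bilinear_remainder_le:
  fixes P :: "'c::real_normed_vector \<Rightarrow> 'd::real_normed_vector \<Rightarrow> 'e::real_normed_vector"
  assumes bl: "bounded_bilinear P" and norm_P: "\<And>x y. norm (P x y) \<le> norm x * norm y"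
  shows "norm (P u1 v1 - P u0 v0 - h *\<^sub>R (P u' v0 + P u0 v'))
           \<le> norm (u1 - u0 - h *\<^sub>R u') * norm v0 + norm u0 * norm (v1 - v0 - h *\<^sub>R v')
              + norm (u1 - u0) * norm (v1 - v0)"
proof -
  interpret P: bounded_bilinear P by (rule bl)
  define A B where "A = u1 - u0 - h *\<^sub>R u'" and "B = v1 - v0 - h *\<^sub>R v'"
  have "P u1 v1 - P u0 v0 - h *\<^sub>R (P u' v0 + P u0 v') = P A v0 + P u0 B + P (u1 - u0) (v1 - v0)"
    unfolding A_def B_def
    by (simp add: P.diff_left P.diff_right P.add_left P.add_right P.scaleR_left P.scaleR_right
        scaleR_right_distrib algebra_simps)
  also have "norm \<dots> \<le> norm (P A v0) + norm (P u0 B) + norm (P (u1 - u0) (v1 - v0))"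
    by (meson add_mono norm_triangle_ineq order_trans order_refl)
  also have "\<dots> \<le> norm A * norm v0 + norm u0 * norm B + norm (u1 - u0) * norm (v1 - v0)"
    by (intro add_mono norm_P)
  finally show ?thesis unfolding A_def B_def .
qed

lemma perturbed_deriv_increment_le:
  assumes u: "perturbed_deriv g u u' b a c" and u': "continuous_on {a..c} u'"
    and b: "continuous_on {a..c} b" and g: "(\<lambda>\<tau>. norm (g \<tau>)) integrable_on {a..c}"
  obtains C d where "C > 0" "d > 0"
    "\<And>s t. a \<le> s \<Longrightarrow> s \<le> t \<Longrightarrow> t \<le> c \<Longrightarrow> t - s < d \<Longrightarrow> norm (u t - u s) \<le> C * ((t - s) + int_norm g s t)"
proof -
  obtain Bb where "Bb > 0" and Bb: "\<And>t. t \<in> {a..c} \<Longrightarrow> norm (b t) \<le> Bb"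
    using continuous_on_interval_bound[OF b] by blast
  obtain Bu' where "Bu' > 0" and Bu': "\<And>t. t \<in> {a..c} \<Longrightarrow> norm (u' t) \<le> Bu'"
    using continuous_on_interval_bound[OF u'] by blast
  obtain d where "d > 0" and d: "\<forall>s t. a \<le> s \<longrightarrow> s \<le> t \<longrightarrow> t \<le> c \<longrightarrow> t - s < d \<longrightarrow>
      norm (u t - u s - (t - s) *\<^sub>R u' s) \<le> b s * int_norm g s t + 1 * ((t - s) + int_norm g s t)"
    using u unfolding perturbed_deriv_def by (meson zero_less_one)
  have "norm (u t - u s) \<le> (Bb + 1 + Bu') * ((t - s) + int_norm g s t)"
    if st: "a \<le> s" "s \<le> t" "t \<le> c" "t - s < d" for s t
  proof -
    define N where "N = int_norm g s t"
    have "0 \<le> N" using int_norm_nonneg[OF g st(1-3)] by (simp add: N_def)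
    have "b s * N \<le> Bb * N" using Bb[of s] st \<open>0 \<le> N\<close> by (intro mult_right_mono) (auto simp: abs_le_iff)
    have "norm (u t - u s) \<le> norm (u t - u s - (t - s) *\<^sub>R u' s) + (t - s) * norm (u' s)"
      using norm_triangle_ineq[of "u t - u s - (t - s) *\<^sub>R u' s" "(t - s) *\<^sub>R u' s"] st by simp
    also have "\<dots> \<le> (Bb * N + ((t - s) + N)) + (t - s) * Bu'"
    proof (rule add_mono)
      have "norm (u t - u s - (t - s) *\<^sub>R u' s) \<le> b s * N + ((t - s) + N)"
        using d st unfolding N_def by simp
      then show "norm (u t - u s - (t - s) *\<^sub>R u' s) \<le> Bb * N + ((t - s) + N)"
        using \<open>b s * N \<le> Bb * N\<close> by linarith
      show "(t - s) * norm (u' s) \<le> (t - s) * Bu'" using Bu'[of s] st by (intro mult_left_mono) auto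
    qed
    also have "\<dots> \<le> (Bb + 1 + Bu') * ((t - s) + N)"
    proof -
      have "0 \<le> Bb * (t - s) + Bu' * N" using \<open>Bb > 0\<close> \<open>Bu' > 0\<close> \<open>0 \<le> N\<close> st by simp
      moreover have "(Bb + 1 + Bu') * ((t - s) + N)
          = (Bb * N + ((t - s) + N)) + (t - s) * Bu' + (Bb * (t - s) + Bu' * N)"
        by (simp add: algebra_simps)
      ultimately show ?thesis by linarith
    qed
    finally show ?thesis by (simp add: N_def)
  qed
  with \<open>d > 0\<close> \<open>Bb > 0\<close> \<open>Bu' > 0\<close> that[of "Bb + 1 + Bu'" d] show ?thesis by simp
qed

lemma perturbed_deriv_bilinear:
  fixes u u' :: "real \<Rightarrow> 'c::real_normed_vector" and v v' :: "real \<Rightarrow> 'd::real_normed_vector"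
    and P :: "'c \<Rightarrow> 'd \<Rightarrow> 'e::real_normed_vector"
  assumes bl: "bounded_bilinear P" and norm_P: "\<And>x y. norm (P x y) \<le> norm x * norm y"
    and du: "perturbed_deriv g u u' bu a c" and dv: "perturbed_deriv g v v' bv a c"
    and u: "continuous_on {a..c} u" and u': "continuous_on {a..c} u'" and bu: "continuous_on {a..c} bu"
    and v: "continuous_on {a..c} v"
    and g: "(\<lambda>\<tau>. norm (g \<tau>)) integrable_on {a..c}"
  shows "perturbed_deriv g (\<lambda>t. P (u t) (v t)) (\<lambda>t. P (u' t) (v t) + P (u t) (v' t))
            (\<lambda>t. bu t * norm (v t) + norm (u t) * bv t) a c"
  unfolding perturbed_deriv_def
proof (intro allI impI)
  fix e :: real assume "e > 0"
  obtain Bu where "Bu > 0" and Bu: "\<And>t. t \<in> {a..c} \<Longrightarrow> norm (u t) \<le> Bu"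
    using continuous_on_interval_bound[OF u] by blast
  obtain Bv where "Bv > 0" and Bv: "\<And>t. t \<in> {a..c} \<Longrightarrow> norm (v t) \<le> Bv"
    using continuous_on_interval_bound[OF v] by blast
  obtain C d0 where "C > 0" "d0 > 0" and incr: "\<And>s t. a \<le> s \<Longrightarrow> s \<le> t \<Longrightarrow> t \<le> c \<Longrightarrow> t - s < d0 \<Longrightarrow>
      norm (u t - u s) \<le> C * ((t - s) + int_norm g s t)"
    using perturbed_deriv_increment_le[OF du u' bu g] by blast
  define e1 where "e1 = e / (2 * (Bu + Bv))"
  define \<eta> where "\<eta> = e / (2 * C)"
  have "e1 > 0" "\<eta> > 0" using \<open>e > 0\<close> \<open>Bu > 0\<close> \<open>Bv > 0\<close> \<open>C > 0\<close> by (auto simp: e1_def \<eta>_def)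
  obtain d1 where "d1 > 0" and d1: "\<forall>s t. a \<le> s \<longrightarrow> s \<le> t \<longrightarrow> t \<le> c \<longrightarrow> t - s < d1 \<longrightarrow>
      norm (u t - u s - (t - s) *\<^sub>R u' s) \<le> bu s * int_norm g s t + e1 * ((t - s) + int_norm g s t)"
    using du \<open>e1 > 0\<close> unfolding perturbed_deriv_def by blast
  obtain d2 where "d2 > 0" and d2: "\<forall>s t. a \<le> s \<longrightarrow> s \<le> t \<longrightarrow> t \<le> c \<longrightarrow> t - s < d2 \<longrightarrow>
      norm (v t - v s - (t - s) *\<^sub>R v' s) \<le> bv s * int_norm g s t + e1 * ((t - s) + int_norm g s t)"
    using dv \<open>e1 > 0\<close> unfolding perturbed_deriv_def by blast
  obtain d3 where "d3 > 0" and d3: "\<And>s t. s \<in> {a..c} \<Longrightarrow> t \<in> {a..c} \<Longrightarrow> \<bar>t - s\<bar> < d3 \<Longrightarrow> norm (v t - v s) < \<eta>"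
    using uniformly_continuous_on_interval_delta[OF v \<open>\<eta> > 0\<close>] by blast
  show "\<exists>d>0. \<forall>s t. a \<le> s \<longrightarrow> s \<le> t \<longrightarrow> t \<le> c \<longrightarrow> t - s < d \<longrightarrow>
      norm (P (u t) (v t) - P (u s) (v s) - (t - s) *\<^sub>R (P (u' s) (v s) + P (u s) (v' s)))
        \<le> (bu s * norm (v s) + norm (u s) * bv s) * int_norm g s t + e * ((t - s) + int_norm g s t)"
  proof (intro exI[of _ "min (min d0 d1) (min d2 d3)"] conjI allI impI)
    show "0 < min (min d0 d1) (min d2 d3)" using \<open>d0 > 0\<close> \<open>d1 > 0\<close> \<open>d2 > 0\<close> \<open>d3 > 0\<close> by simp
    fix s t assume "a \<le> s" "s \<le> t" "t \<le> c" and small: "t - s < min (min d0 d1) (min d2 d3)"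
    then have st: "a \<le> s" "s \<le> t" "t \<le> c" and s: "s \<in> {a..c}" by auto
    define N T where "N = int_norm g s t" and "T = (t - s) + int_norm g s t"
    have "0 \<le> N" "0 \<le> T" using int_norm_nonneg[OF g st] st by (auto simp: N_def T_def)
    have "norm (P (u t) (v t) - P (u s) (v s) - (t - s) *\<^sub>R (P (u' s) (v s) + P (u s) (v' s)))
        \<le> norm (u t - u s - (t - s) *\<^sub>R u' s) * norm (v s) + norm (u s) * norm (v t - v s - (t - s) *\<^sub>R v' s)
           + norm (u t - u s) * norm (v t - v s)"
      by (rule bilinear_remainder_le[OF bl norm_P])
    also have "\<dots> \<le> (bu s * N + e1 * T) * norm (v s) + norm (u s) * (bv s * N + e1 * T) + (C * T) * \<eta>"
    proof (intro add_mono mult_right_mono mult_left_mono mult_mono)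
      show "norm (u t - u s - (t - s) *\<^sub>R u' s) \<le> bu s * N + e1 * T"
        using d1 st small by (simp add: N_def T_def)
      show "norm (v t - v s - (t - s) *\<^sub>R v' s) \<le> bv s * N + e1 * T"
        using d2 st small by (simp add: N_def T_def)
      show "norm (u t - u s) \<le> C * T" using incr[OF st] small by (simp add: T_def)
      show "norm (v t - v s) \<le> \<eta>" using d3[of s t] st small by simp
    qed (use \<open>C > 0\<close> \<open>0 \<le> T\<close> in auto)
    also have "\<dots> = (bu s * norm (v s) + norm (u s) * bv s) * N + e1 * (norm (v s) + norm (u s)) * T + C * \<eta> * T"
      by (simp add: algebra_simps)
    also have "\<dots> \<le> (bu s * norm (v s) + norm (u s) * bv s) * N + e / 2 * T + e / 2 * T"
    proof (intro add_mono order_refl mult_right_mono \<open>0 \<le> T\<close>)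
      have "e1 * (norm (v s) + norm (u s)) \<le> e1 * (Bu + Bv)"
        using Bu[OF s] Bv[OF s] \<open>e1 > 0\<close> by (intro mult_left_mono) auto
      also have "\<dots> = e / 2" using \<open>Bu > 0\<close> \<open>Bv > 0\<close> by (simp add: e1_def field_simps)
      finally show "e1 * (norm (v s) + norm (u s)) \<le> e / 2" .
      show "C * \<eta> \<le> e / 2" using \<open>C > 0\<close> by (simp add: \<eta>_def)
    qed
    finally show "norm (P (u t) (v t) - P (u s) (v s) - (t - s) *\<^sub>R (P (u' s) (v s) + P (u s) (v' s)))
        \<le> (bu s * norm (v s) + norm (u s) * bv s) * int_norm g s t + e * ((t - s) + int_norm g s t)"
      by (simp add: N_def T_def algebra_simps)
  qed
qed

lemma inner_has_integral_primitive_interval: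
  fixes F f :: "real \<Rightarrow> 'b::real_inner"
  assumes prim: "\<And>t. 0 \<le> t \<Longrightarrow> (F has_integral (f t - f 0)) {0..t}" and "0 \<le> s" "s \<le> t"
  shows "((\<lambda>\<tau>. F \<tau> \<bullet> e) has_integral ((f t - f s) \<bullet> e)) {s..t}"
proof -
  have prim_e: "((\<lambda>\<tau>. F \<tau> \<bullet> e) has_integral ((f r - f 0) \<bullet> e)) {0..r}" if "0 \<le> r" for r
    using has_integral_linear[OF prim[OF that] bounded_linear_inner_left[of e]] by (simp add: o_def)
  have int_t: "(\<lambda>\<tau>. F \<tau> \<bullet> e) integrable_on {0..t}" using prim_e[of t] assms(2,3) by auto
  have "integral {0..s} (\<lambda>\<tau>. F \<tau> \<bullet> e) + integral {s..t} (\<lambda>\<tau>. F \<tau> \<bullet> e) = integral {0..t} (\<lambda>\<tau>. F \<tau> \<bullet> e)"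
    by (rule Henstock_Kurzweil_Integration.integral_combine) (use assms int_t in auto)
  then have "integral {s..t} (\<lambda>\<tau>. F \<tau> \<bullet> e) = (f t - f s) \<bullet> e"
    using integral_unique[OF prim_e[of s]] integral_unique[OF prim_e[of t]] assms(2,3)
    by (simp add: inner_diff_left)
  moreover have "(\<lambda>\<tau>. F \<tau> \<bullet> e) integrable_on {s..t}"
    by (rule integrable_on_subinterval[OF int_t]) (use assms in auto)
  ultimately show ?thesis by (metis integrable_integral)
qed

lemma inner_primitive_remainder_le:
  fixes F f :: "real \<Rightarrow> 'b::real_inner"
  assumes prim: "\<And>e. ((\<lambda>\<tau>. F \<tau> \<bullet> e) has_integral ((f t - f s) \<bullet> e)) {s..t}" and "s \<le> t"
    and le: "\<And>\<tau>. \<tau> \<in> {s..t} \<Longrightarrow> norm (F \<tau> - z) \<le> B"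
  shows "norm (f t - f s - (t - s) *\<^sub>R z) \<le> B * (t - s)"
proof -
  let ?D = "f t - f s - (t - s) *\<^sub>R z"
  have "((\<lambda>\<tau>. (F \<tau> - z) \<bullet> ?D) has_integral (?D \<bullet> ?D)) {s..t}"
    using has_integral_diff[OF prim[of ?D] has_integral_const_real[of "z \<bullet> ?D" s t]] \<open>s \<le> t\<close>
    by (simp add: inner_diff_left)
  moreover have "((\<lambda>_. B) has_integral B * (t - s)) {s..t}"
    using has_integral_const_real[of B s t] \<open>s \<le> t\<close> by (simp add: mult.commute)
  ultimately show ?thesis using le by (rule norm_le_of_inner_has_integral)
qed

lemma continuous_on_inner_primitive:
  fixes F f :: "real \<Rightarrow> 'b::real_inner"
  assumes prim: "\<And>e s t. a \<le> s \<Longrightarrow> s \<le> t \<Longrightarrow> t \<le> c \<Longrightarrow>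
                   ((\<lambda>\<tau>. F \<tau> \<bullet> e) has_integral ((f t - f s) \<bullet> e)) {s..t}"
    and F: "(\<lambda>\<tau>. norm (F \<tau>)) integrable_on {a..c}"
  shows "continuous_on {a..c} f"
proof -
  define H where "H t = integral {a..t} (\<lambda>\<tau>. norm (F \<tau>))" for t
  have "continuous_on {a..c} H" unfolding H_def by (rule indefinite_integral_continuous_1[OF F])
  moreover have "norm (f t - f s) \<le> H t - H s" if st: "a \<le> s" "s \<le> t" "t \<le> c" for s t
  proof (rule norm_le_of_inner_has_integral[OF _ _ order_refl])
    show "((\<lambda>\<tau>. F \<tau> \<bullet> (f t - f s)) has_integral ((f t - f s) \<bullet> (f t - f s))) {s..t}"
      by (rule prim[OF st])
    have "integral {a..s} (\<lambda>\<tau>. norm (F \<tau>)) + integral {s..t} (\<lambda>\<tau>. norm (F \<tau>)) = integral {a..t} (\<lambda>\<tau>. norm (F \<tau>))"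
      using integrable_on_subinterval[OF F, of a t] st
      by (intro Henstock_Kurzweil_Integration.integral_combine) auto
    then have "integral {s..t} (\<lambda>\<tau>. norm (F \<tau>)) = H t - H s" by (simp add: H_def)
    with integrable_on_subinterval[OF F, of s t] st
    show "((\<lambda>\<tau>. norm (F \<tau>)) has_integral (H t - H s)) {s..t}" by (metis atLeastatMost_subset_iff integrable_integral)
  qed
  ultimately show ?thesis
    unfolding continuous_on_iff dist_norm
    by (smt (verit, ccfv_threshold) atLeastAtMost_iff norm_minus_commute real_norm_def)
qed

lemma has_vector_derivative_inner_primitive:
  fixes F f :: "real \<Rightarrow> 'b::real_inner"
  assumes prim: "\<And>e s t. a \<le> s \<Longrightarrow> s \<le> t \<Longrightarrow> t \<le> c \<Longrightarrow>
                   ((\<lambda>\<tau>. F \<tau> \<bullet> e) has_integral ((f t - f s) \<bullet> e)) {s..t}"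
    and F: "continuous_on {a..c} F" and \<tau>: "\<tau> \<in> {a..c}"
  shows "(f has_vector_derivative F \<tau>) (at \<tau> within {a..c})"
  unfolding has_vector_derivative_def has_derivative_within_alt
proof (intro conjI allI impI bounded_linear_scaleR_left)
  fix e :: real assume "e > 0"
  obtain d where "d > 0" and osc: "\<And>s t. s \<in> {a..c} \<Longrightarrow> t \<in> {a..c} \<Longrightarrow> \<bar>t - s\<bar> < d \<Longrightarrow> norm (F t - F s) < e"
    using uniformly_continuous_on_interval_delta[OF F \<open>e > 0\<close>] by blast
  have "norm (f y - f \<tau> - (y - \<tau>) *\<^sub>R F \<tau>) \<le> e * norm (y - \<tau>)" if y: "y \<in> {a..c}" "norm (y - \<tau>) < d" for y
  proof (cases "\<tau> \<le> y")
    case True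
    have "norm (f y - f \<tau> - (y - \<tau>) *\<^sub>R F \<tau>) \<le> e * (y - \<tau>)"
      by (rule inner_primitive_remainder_le[OF prim True]) (use \<tau> y True osc[of \<tau>] in \<open>auto intro: less_imp_le\<close>)
    then show ?thesis using True by simp
  next
    case False
    have "norm (f \<tau> - f y - (\<tau> - y) *\<^sub>R F \<tau>) \<le> e * (\<tau> - y)"
      by (rule inner_primitive_remainder_le[OF prim]) (use \<tau> y False osc[of \<tau>] in \<open>auto intro: less_imp_le\<close>)
    moreover have "f y - f \<tau> - (y - \<tau>) *\<^sub>R F \<tau> = - (f \<tau> - f y - (\<tau> - y) *\<^sub>R F \<tau>)"
      by (simp add: algebra_simps)
    ultimately show ?thesis using False by (simp only: norm_minus_cancel) simp
  qed
  with \<open>d > 0\<close> show "\<exists>d>0. \<forall>y\<in>{a..c}. norm (y - \<tau>) < d \<longrightarrow> norm (f y - f \<tau> - (y - \<tau>) *\<^sub>R F \<tau>) \<le> e * norm (y - \<tau>)"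
    by blast
qed

lemma convex_gradient_inequality:
  fixes \<Phi> :: "'a::real_inner \<Rightarrow> real"
  assumes convex: "convex_on UNIV \<Phi>" and grad: "(\<Phi> has_derivative (\<lambda>h. G \<bullet> h)) (at u)"
  shows "G \<bullet> (z - u) \<le> \<Phi> z - \<Phi> u"
proof -
  define \<phi> where "\<phi> \<theta> = \<Phi> (u + \<theta> *\<^sub>R (z - u))" for \<theta> :: real
  have "convex_on UNIV \<phi>"
  proof (rule convex_onI)
    fix t x y :: real assume t: "t > 0" "t < 1"
    have "u + ((1 - t) *\<^sub>R x + t *\<^sub>R y) *\<^sub>R (z - u)
        = (1 - t) *\<^sub>R (u + x *\<^sub>R (z - u)) + t *\<^sub>R (u + y *\<^sub>R (z - u))"
      by (simp add: algebra_simps)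
    then show "\<phi> ((1 - t) *\<^sub>R x + t *\<^sub>R y) \<le> (1 - t) * \<phi> x + t * \<phi> y"
      using convex_onD[OF convex, of t "u + x *\<^sub>R (z - u)" "u + y *\<^sub>R (z - u)"] t by (simp add: \<phi>_def)
  qed simp
  moreover have "(\<phi> has_real_derivative G \<bullet> (z - u)) (at 0)"
  proof -
    have lin: "((\<lambda>\<theta>. u + \<theta> *\<^sub>R (z - u)) has_derivative (\<lambda>h. h *\<^sub>R (z - u))) (at 0)"
      by (auto intro!: derivative_eq_intros)
    have "(\<Phi> has_derivative (\<lambda>h. G \<bullet> h)) (at ((\<lambda>\<theta>. u + \<theta> *\<^sub>R (z - u)) 0))" using grad by simp
    from has_derivative_compose[OF lin this]
    have "(\<phi> has_derivative (\<lambda>h. G \<bullet> (h *\<^sub>R (z - u)))) (at 0)" by (simp add: \<phi>_def[abs_def])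
    moreover have "(\<lambda>h. G \<bullet> (h *\<^sub>R (z - u))) = (*) (G \<bullet> (z - u))" by (auto simp: mult.commute)
    ultimately show ?thesis by (simp add: has_field_derivative_def)
  qed
  ultimately have "G \<bullet> (z - u) * (1 - 0) \<le> \<phi> 1 - \<phi> 0"
    by (intro convex_on_imp_above_tangent[where A = UNIV]) auto
  then show ?thesis by (simp add: \<phi>_def)
qed

lemma norm_scaleR_le: "norm (a *\<^sub>R y) \<le> norm a * norm y" for a :: real and y :: "'b::real_normed_vector"
  by simp

lemma norm_inner_le: "norm (x \<bullet> y) \<le> norm x * norm y" for x y :: "'b::real_inner"
  by (simp add: Cauchy_Schwarz_ineq2)

lemma norm_mult_le: "norm (a * b) \<le> norm a * norm b" for a b :: real
  by (simp add: abs_mult)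

lemma powr_add_eq: "x powr a * x powr b = x powr c" if "a + b = c" for x a b c :: real
  using that by (simp add: powr_add[symmetric])

lemma lyap_rate_algebra:
  fixes X Y Gr :: "'a::real_inner" and F b2' bet bet' lam lam' xi xi' gam :: real
  assumes conv: "F \<le> X \<bullet> Gr" and "0 \<le> lam * bet"
  shows "b2' * F + bet * bet * (Gr \<bullet> Y)
      + (lam' *\<^sub>R X + lam *\<^sub>R Y + bet' *\<^sub>R Y + bet *\<^sub>R (- gam *\<^sub>R Y - Gr)) \<bullet> (lam *\<^sub>R X + bet *\<^sub>R Y)
      + xi' * (X \<bullet> X) + 2 * xi * (X \<bullet> Y)
    \<le> (b2' - lam * bet) * F + bet * (lam + bet' - bet * gam) * (Y \<bullet> Y) + (lam * lam' + xi') * (X \<bullet> X)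
       + (lam * (lam + bet' - bet * gam) + bet * lam' + 2 * xi) * (X \<bullet> Y)"
proof -
  have "b2' * F + bet * bet * (Gr \<bullet> Y)
      + (lam' *\<^sub>R X + lam *\<^sub>R Y + bet' *\<^sub>R Y + bet *\<^sub>R (- gam *\<^sub>R Y - Gr)) \<bullet> (lam *\<^sub>R X + bet *\<^sub>R Y)
      + xi' * (X \<bullet> X) + 2 * xi * (X \<bullet> Y)
    = (b2' - lam * bet) * F + bet * (lam + bet' - bet * gam) * (Y \<bullet> Y) + (lam * lam' + xi') * (X \<bullet> X)
       + (lam * (lam + bet' - bet * gam) + bet * lam' + 2 * xi) * (X \<bullet> Y) + lam * bet * (F - X \<bullet> Gr)"
    by (simp add: inner_add_left inner_add_right inner_diff_left inner_diff_right
        inner_commute[of Y X] inner_commute[of Gr X] inner_commute[of Gr Y] algebra_simps)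
  moreover have "lam * bet * (F - X \<bullet> Gr) \<le> 0" using assms by (simp add: mult_nonneg_nonpos)
  ultimately show ?thesis by linarith
qed

lemma cubic_le_3:
  fixes \<nu> :: real
  assumes "0 \<le> \<nu>" "\<nu> < 1"
  shows "(2 * \<nu> + 1) * (\<nu> - 1) * (1 - 2 * \<nu>) \<le> 3"
proof (cases "\<nu> \<le> 1 / 2")
  case True
  then have "0 \<le> (2 * \<nu> + 1) * (1 - \<nu>) * (1 - 2 * \<nu>)" using assms by simp
  then show ?thesis by (simp add: algebra_simps)
next
  case False
  have "(2 * \<nu> + 1) * ((1 - \<nu>) * (2 * \<nu> - 1)) \<le> 3 * (1 * 1)"
    using assms False by (intro mult_mono) auto
  then show ?thesis by (simp add: algebra_simps)
qed

lemma integral_powr_le: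
  fixes \<alpha> :: real
  assumes "\<alpha> < 1" "0 \<le> a" "a \<le> b"
  shows "integral {a..b} (\<lambda>s. (1 + s) powr (\<alpha> - 2)) \<le> (1 + a) powr (\<alpha> - 1) / (1 - \<alpha>)"
proof -
  define F where "F s = (1 + s) powr (\<alpha> - 1) / (\<alpha> - 1)" for s
  have "((\<lambda>s. (1 + s) powr (\<alpha> - 2)) has_integral (F b - F a)) {a..b}"
  proof (rule fundamental_theorem_of_calculus[OF assms(3)])
    fix s assume "s \<in> {a..b}"
    then have "0 < 1 + s" using assms by simp
    then have "(F has_real_derivative (\<alpha> - 1) * (1 + s) powr (\<alpha> - 1 - 1) * 1 / (\<alpha> - 1)) (at s within {a..b})"
      unfolding F_def by (auto intro!: derivative_eq_intros)
    then show "(F has_vector_derivative (1 + s) powr (\<alpha> - 2)) (at s within {a..b})"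
      using assms(1) by (simp add: has_real_derivative_iff_has_vector_derivative)
  qed
  then have "integral {a..b} (\<lambda>s. (1 + s) powr (\<alpha> - 2)) = F b - F a" by (rule integral_unique)
  also have "\<dots> = ((1 + a) powr (\<alpha> - 1) - (1 + b) powr (\<alpha> - 1)) / (1 - \<alpha>)"
    unfolding F_def diff_divide_distrib[symmetric] by (metis minus_diff_eq minus_divide_divide)
  also have "\<dots> \<le> (1 + a) powr (\<alpha> - 1) / (1 - \<alpha>)"
    using assms(1) by (intro divide_right_mono) auto
  finally show ?thesis .
qed

lemma le_square_of_self_bound:
  fixes M E B :: real
  assumes "0 \<le> M" "0 \<le> E" "0 \<le> B" and M: "M \<le> E + M / 2 + sqrt (2 * M) * B"
  shows "M \<le> (2 * sqrt 2 * B + sqrt (2 * E))\<^sup>2"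
proof -
  define m where "m = sqrt M"
  have "0 \<le> m" "m * m = M" using \<open>0 \<le> M\<close> by (auto simp: m_def)
  have "sqrt (2 * M) = sqrt 2 * m" by (simp add: m_def real_sqrt_mult)
  then have "M \<le> E + M / 2 + sqrt 2 * B * m" using M by (simp add: algebra_simps)
  then have quad: "m * m \<le> 2 * E + (2 * sqrt 2 * B) * m" using \<open>m * m = M\<close> by linarith
  have "m \<le> 2 * sqrt 2 * B + sqrt (2 * E)"
  proof (rule ccontr)
    assume "\<not> ?thesis"
    then have lt: "2 * sqrt 2 * B + sqrt (2 * E) < m" by simp
    moreover have "0 \<le> 2 * sqrt 2 * B + sqrt (2 * E)" using \<open>0 \<le> B\<close> \<open>0 \<le> E\<close> by simp
    ultimately have "(2 * sqrt 2 * B + sqrt (2 * E)) * m < m * m"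
      by (intro mult_strict_right_mono) auto
    moreover have "sqrt (2 * E) * sqrt (2 * E) \<le> sqrt (2 * E) * m"
    proof (rule mult_left_mono)
      have "0 \<le> 2 * sqrt 2 * B" using \<open>0 \<le> B\<close> by simp
      then show "sqrt (2 * E) \<le> m" using lt by linarith
    qed (use \<open>0 \<le> E\<close> in simp)
    ultimately show False using quad \<open>0 \<le> E\<close> by (simp add: algebra_simps)
  qed
  then have "m * m \<le> (2 * sqrt 2 * B + sqrt (2 * E)) * (2 * sqrt 2 * B + sqrt (2 * E))"
    using \<open>0 \<le> m\<close> by (intro mult_mono) auto
  then show ?thesis using \<open>m * m = M\<close> by (simp add: power2_eq_square)
qed

lemma integrable_on_atLeast_of_bounded_integrals:
  fixes f :: "real \<Rightarrow> real"
  assumes cont: "\<And>b. continuous_on {0..b} f" and nonneg: "\<And>t. 0 \<le> t \<Longrightarrow> 0 \<le> f t"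
    and bounded: "\<And>b. 0 \<le> b \<Longrightarrow> integral {0..b} f \<le> B"
  shows "f integrable_on {0..}"
proof -
  define h where "h n t = (if t \<in> {..real n} then f t else 0)" for n :: nat and t
  have set_eq: "{..real n} \<inter> {0..} = {0..real n}" for n by auto
  have h_int: "h n integrable_on {0..}" for n
    unfolding h_def integrable_restrict_Int set_eq by (rule integrable_continuous_real[OF cont])
  have h_integral: "integral {0..} (h n) = integral {0..real n} f" for n
    unfolding h_def integral_restrict_Int set_eq ..
  have "f integrable_on {0..} \<and> ((\<lambda>k. integral {0..} (h k)) \<longlongrightarrow> integral {0..} f) sequentially"
  proof (rule monotone_convergence_increasing[OF h_int])
    show "h k t \<le> h (Suc k) t" if "t \<in> {0..}" for k t
      using nonneg that by (auto simp: h_def)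
    show "((\<lambda>k. h k t) \<longlongrightarrow> f t) sequentially" for t
    proof (rule tendsto_eventually)
      obtain N :: nat where "t \<le> real N" using real_arch_simple by blast
      then show "\<forall>\<^sub>F k in sequentially. h k t = f t"
        by (intro eventually_sequentiallyI[of N]) (auto simp: h_def)
    qed
    have "\<bar>integral {0..real n} f\<bar> \<le> B" for n
      using bounded[of "real n"] integral_nonneg[OF integrable_continuous_real[OF cont], of "real n"] nonneg
      by (simp add: abs_if)
    then show "bounded (range (\<lambda>k. integral {0..} (h k)))"
      unfolding bounded_iff h_integral by auto
  qed
  then show ?thesis by blast
qed

lemma integral_inverse_1_plus:
  fixes a b :: real
  assumes "0 \<le> a" "a \<le> b"
  shows "integral {a..b} (\<lambda>\<tau>. 1 / (1 + \<tau>)) = ln (1 + b) - ln (1 + a)"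
proof (rule integral_unique, rule fundamental_theorem_of_calculus[OF assms(2)])
  fix s assume "s \<in> {a..b}"
  then have "0 < 1 + s" using assms by simp
  then have "((\<lambda>s. ln (1 + s)) has_real_derivative 1 / (1 + s)) (at s within {a..b})"
    by (auto intro!: derivative_eq_intros)
  then show "((\<lambda>s. ln (1 + s)) has_vector_derivative 1 / (1 + s)) (at s within {a..b})"
    by (simp add: has_real_derivative_iff_has_vector_derivative)
qed

text \<open>
  If \<open>\<integral> U/(1 + t)\<close> is bounded, \<open>U\<close> cannot stay above \<open>\<epsilon>\<close> (the integral of \<open>1/(1 + t)\<close>
  diverges); if moreover the increments of \<open>U\<close> are dominated by those of a bounded monotone \<open>H\<close>,
  \<open>U\<close> stays small after such a point.
\<close>

lemma exists_less_of_log_weighted_integral_bounded: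
  fixes U :: "real \<Rightarrow> real"
  assumes "0 \<le> t1" and cont: "\<And>b. continuous_on {t1..b} U"
    and bound: "\<And>b. t1 \<le> b \<Longrightarrow> integral {t1..b} (\<lambda>\<tau>. U \<tau> / (1 + \<tau>)) \<le> C" and "\<epsilon> > 0"
  shows "\<exists>t\<ge>t1. U t < \<epsilon>"
proof (rule ccontr)
  assume "\<not> ?thesis"
  then have large: "\<And>t. t1 \<le> t \<Longrightarrow> \<epsilon> \<le> U t" by force
  define K where "K = max 0 C / \<epsilon> + 1"
  define b where "b = (1 + t1) * exp K - 1"
  have "0 \<le> K" using \<open>\<epsilon> > 0\<close> by (simp add: K_def)
  then have "1 + t1 \<le> (1 + t1) * exp K" using \<open>0 \<le> t1\<close> mult_left_mono[of 1 "exp K" "1 + t1"] by simp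
  then have "t1 \<le> b" by (simp add: b_def)
  have "\<epsilon> * K = \<epsilon> * integral {t1..b} (\<lambda>\<tau>. 1 / (1 + \<tau>))"
    using integral_inverse_1_plus[OF \<open>0 \<le> t1\<close> \<open>t1 \<le> b\<close>] \<open>0 \<le> t1\<close> by (simp add: b_def ln_mult)
  also have "\<dots> = integral {t1..b} (\<lambda>\<tau>. \<epsilon> * (1 / (1 + \<tau>)))" by (rule integral_mult_right[symmetric])
  also have "\<dots> \<le> integral {t1..b} (\<lambda>\<tau>. U \<tau> / (1 + \<tau>))"
  proof (rule integral_le)
    show "(\<lambda>\<tau>. \<epsilon> * (1 / (1 + \<tau>))) integrable_on {t1..b}" "(\<lambda>\<tau>. U \<tau> / (1 + \<tau>)) integrable_on {t1..b}"
      using \<open>0 \<le> t1\<close> cont[of b] by (auto intro!: integrable_continuous_real continuous_intros)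
    show "\<epsilon> * (1 / (1 + \<tau>)) \<le> U \<tau> / (1 + \<tau>)" if "\<tau> \<in> {t1..b}" for \<tau>
      using large[of \<tau>] that \<open>0 \<le> t1\<close> by (simp add: divide_right_mono)
  qed
  also have "\<dots> \<le> C" using bound[OF \<open>t1 \<le> b\<close>] .
  finally have "\<epsilon> * K \<le> C" .
  moreover have "\<epsilon> * K = max 0 C + \<epsilon>" using \<open>\<epsilon> > 0\<close> by (simp add: K_def field_simps)
  ultimately show False using \<open>\<epsilon> > 0\<close> by linarith
qed

lemma eventually_le_of_log_weighted_integral_bounded:
  fixes U H :: "real \<Rightarrow> real"
  assumes "0 \<le> T" and cont: "\<And>b. continuous_on {T..b} U" and U_nonneg: "\<And>t. T \<le> t \<Longrightarrow> 0 \<le> U t"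
    and bound: "\<And>b. T \<le> b \<Longrightarrow> integral {T..b} (\<lambda>\<tau>. U \<tau> / (1 + \<tau>)) \<le> C"
    and increment: "\<And>a b. T \<le> a \<Longrightarrow> a \<le> b \<Longrightarrow> U b - U a \<le> H b - H a"
    and H_mono: "\<And>a b. T \<le> a \<Longrightarrow> a \<le> b \<Longrightarrow> H a \<le> H b" and H_bdd: "bdd_above (H ` {T..})"
    and "\<epsilon> > 0"
  shows "eventually (\<lambda>t. U t \<le> \<epsilon>) at_top"
proof -
  define S where "S = Sup (H ` {T..})"
  obtain t1 where "T \<le> t1" and t1: "S - \<epsilon> / 2 < H t1"
    using less_cSupD[of "H ` {T..}" "S - \<epsilon> / 2"] \<open>\<epsilon> > 0\<close> by (force simp: S_def)
  have "\<exists>t\<ge>t1. U t < \<epsilon> / 2"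
  proof (rule exists_less_of_log_weighted_integral_bounded)
    show "continuous_on {t1..b} U" for b
      by (rule continuous_on_subset[OF cont]) (use \<open>T \<le> t1\<close> in auto)
    show "integral {t1..b} (\<lambda>\<tau>. U \<tau> / (1 + \<tau>)) \<le> C" if "t1 \<le> b" for b
    proof -
      have "integral {t1..b} (\<lambda>\<tau>. U \<tau> / (1 + \<tau>)) \<le> integral {T..b} (\<lambda>\<tau>. U \<tau> / (1 + \<tau>))"
        using \<open>0 \<le> T\<close> \<open>T \<le> t1\<close> that cont[of b] continuous_on_subset[OF cont[of b], of "{t1..b}"] U_nonneg
        by (intro integral_subset_le integrable_continuous_real continuous_intros) auto
      then show ?thesis using bound[of b] \<open>T \<le> t1\<close> that by simp
    qed
  qed (use \<open>0 \<le> T\<close> \<open>T \<le> t1\<close> \<open>\<epsilon> > 0\<close> in auto)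
  then obtain t2 where "t1 \<le> t2" "U t2 < \<epsilon> / 2" by blast
  show ?thesis
  proof (rule eventually_at_top_linorderI[of t2])
    fix t assume "t2 \<le> t"
    then have "U t \<le> U t2 + (H t - H t2)" using increment[of t2 t] \<open>T \<le> t1\<close> \<open>t1 \<le> t2\<close> by simp
    moreover have "H t1 \<le> H t2" using H_mono \<open>T \<le> t1\<close> \<open>t1 \<le> t2\<close> by simp
    moreover have "H t \<le> S"
      unfolding S_def using H_bdd \<open>T \<le> t1\<close> \<open>t1 \<le> t2\<close> \<open>t2 \<le> t\<close> by (intro cSup_upper) auto
    ultimately show "U t \<le> \<epsilon>" using t1 \<open>U t2 < \<epsilon> / 2\<close> by linarith
  qed
qed

lemma energy_rate_algebra:
  fixes Y Gr :: "'a::real_inner" and F b2' bet bet' gam :: real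
  shows "b2' * F + bet * bet * (Gr \<bullet> Y) + (bet' *\<^sub>R Y + bet *\<^sub>R (- gam *\<^sub>R Y - Gr)) \<bullet> (bet *\<^sub>R Y)
    = b2' * F + (bet' * bet - bet * bet * gam) * (Y \<bullet> Y)"
  by (simp add: inner_add_left inner_diff_left inner_commute[of Gr Y] algebra_simps)





locale damped_inertial_trajectory =
  fixes \<Phi> :: "'a::{real_inner, complete_space} \<Rightarrow> real"
    and gradPhi :: "'a \<Rightarrow> 'a"
    and x x' x'' g :: "real \<Rightarrow> 'a"
    and c \<alpha> \<nu> :: real
  assumes convex: "convex_on UNIV \<Phi>"
    and grad: "\<And>u. (\<Phi> has_derivative (\<lambda>h. gradPhi u \<bullet> h)) (at u)"
    and grad_continuous: "continuous_on UNIV gradPhi"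
    and has_minimizer: "\<exists>v. \<forall>y. \<Phi> v \<le> \<Phi> y"
    and c_pos: "c > 0"
    and alpha: "0 \<le> \<alpha>" "\<alpha> < 1"
    and norm_g_integrable: "(\<lambda>t. norm (g t)) integrable_on {0..}"
    and x_primitive: "\<And>t. t \<ge> 0 \<Longrightarrow> (x' has_integral (x t - x 0)) {0..t}"
    and x'_primitive: "\<And>t. t \<ge> 0 \<Longrightarrow> (x'' has_integral (x' t - x' 0)) {0..t}"
    and x''_integrable: "\<And>T. T \<ge> 0 \<Longrightarrow> (\<lambda>t. norm (x'' t)) integrable_on {0..T}"
    and ode: "AE t in lebesgue. t \<ge> 0 \<longrightarrow>
               x'' t + (c / (1 + t) powr \<alpha>) *\<^sub>R x' t + gradPhi (x t) = g t"
    and nu: "\<alpha> \<le> \<nu>" "\<nu> \<le> (1 + \<alpha>) / 2"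
    and g_weighted: "(\<lambda>t. (1 + t) powr \<nu> * norm (g t)) integrable_on {0..}"
begin

definition xmin :: 'a where "xmin = (SOME v. \<forall>y. \<Phi> v \<le> \<Phi> y)"

lemma xmin_le: "\<Phi> xmin \<le> \<Phi> u"
  using someI_ex[OF has_minimizer] unfolding xmin_def by blast

lemma INF_Phi_eq: "(INF u. \<Phi> u) = \<Phi> xmin"
  by (rule cInf_eq_minimum) (auto simp: xmin_le)

lemma gap_le_inner_grad: "\<Phi> u - \<Phi> xmin \<le> (u - xmin) \<bullet> gradPhi u"
  using convex_gradient_inequality[OF convex grad[of u], of xmin]
  by (simp add: inner_commute inner_diff_left inner_diff_right)

lemma continuous_Phi: "continuous_on UNIV \<Phi>"
  using grad by (meson continuous_at_imp_continuous_on has_derivative_continuous)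

lemma nu_ge_0: "0 \<le> \<nu>" using nu alpha by linarith

lemma nu_less_1: "\<nu> < 1" using nu alpha by (simp add: field_simps)

lemma norm_g_integrable_on: "0 \<le> a \<Longrightarrow> (\<lambda>\<tau>. norm (g \<tau>)) integrable_on {a..b}"
  by (rule integrable_on_subinterval[OF norm_g_integrable]) auto

lemma g_weighted_integrable_on: "0 \<le> a \<Longrightarrow> (\<lambda>t. (1 + t) powr \<nu> * norm (g t)) integrable_on {a..b}"
  by (rule integrable_on_subinterval[OF g_weighted]) auto

definition damping :: "real \<Rightarrow> real" where "damping t = c / (1 + t) powr \<alpha>"

definition accel :: "real \<Rightarrow> 'a" where "accel t = - damping t *\<^sub>R x' t - gradPhi (x t)"

lemma continuous_x': "0 \<le> a \<Longrightarrow> continuous_on {a..b} x'"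
proof (cases "a \<le> b")
  case True
  assume "0 \<le> a"
  show ?thesis
    by (rule continuous_on_inner_primitive[OF inner_has_integral_primitive_interval[OF x'_primitive]])
       (use \<open>0 \<le> a\<close> True integrable_on_subinterval[OF x''_integrable[of b]] in auto)
qed simp

lemma continuous_x: "0 \<le> a \<Longrightarrow> continuous_on {a..b} x"
  by (rule continuous_on_inner_primitive[OF inner_has_integral_primitive_interval[OF x_primitive]])
     (auto intro: integrable_continuous_real continuous_intros continuous_x')

lemma continuous_trajectory:
  assumes "0 \<le> a"
  shows "continuous_on {a..b} (\<lambda>t. gradPhi (x t))" "continuous_on {a..b} (\<lambda>t. \<Phi> (x t))"
    "continuous_on {a..b} damping" "continuous_on {a..b} accel"
proof -
  show grad_x: "continuous_on {a..b} (\<lambda>t. gradPhi (x t))"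
    using continuous_on_compose2[OF grad_continuous continuous_x[OF assms]] by simp
  show "continuous_on {a..b} (\<lambda>t. \<Phi> (x t))"
    using continuous_on_compose2[OF continuous_Phi continuous_x[OF assms]] by simp
  show damping: "continuous_on {a..b} damping"
    unfolding damping_def using assms by (intro continuous_intros) auto
  show "continuous_on {a..b} accel"
    unfolding accel_def using damping continuous_x'[OF assms] grad_x by (intro continuous_intros)
qed

lemma x'_has_integral_accel:
  assumes "0 \<le> s" "s \<le> t"
  shows "((\<lambda>\<tau>. (accel \<tau> + g \<tau>) \<bullet> e) has_integral ((x' t - x' s) \<bullet> e)) {s..t}"
proof -
  obtain N where N: "{\<tau> \<in> space lebesgue. \<not> (\<tau> \<ge> 0 \<longrightarrow>
      x'' \<tau> + (c / (1 + \<tau>) powr \<alpha>) *\<^sub>R x' \<tau> + gradPhi (x \<tau>) = g \<tau>)} \<subseteq> N"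
    "emeasure lebesgue N = 0" "N \<in> sets lebesgue"
    using ode by (rule AE_E)
  then have "negligible N" by (simp add: negligible_iff_null_sets null_sets_def)
  then show ?thesis
  proof (rule has_integral_spike[OF _ _ inner_has_integral_primitive_interval[OF x'_primitive assms]])
    fix \<tau> assume "\<tau> \<in> {s..t} - N"
    then have "\<tau> \<ge> 0" "\<tau> \<notin> N" using assms by auto
    then have "\<tau> \<notin> {\<tau> \<in> space lebesgue. \<not> (\<tau> \<ge> 0 \<longrightarrow>
        x'' \<tau> + (c / (1 + \<tau>) powr \<alpha>) *\<^sub>R x' \<tau> + gradPhi (x \<tau>) = g \<tau>)}"
      using N(1) by blast
    then have "x'' \<tau> + damping \<tau> *\<^sub>R x' \<tau> + gradPhi (x \<tau>) = g \<tau>"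
      using \<open>\<tau> \<ge> 0\<close> by (simp add: damping_def)
    then have "accel \<tau> + g \<tau> = x'' \<tau>" unfolding accel_def by (simp add: algebra_simps)
    then show "(accel \<tau> + g \<tau>) \<bullet> e = x'' \<tau> \<bullet> e" by simp
  qed
qed

lemma perturbed_deriv_x: "0 \<le> a \<Longrightarrow> perturbed_deriv g x x' (\<lambda>_. 0) a b"
  by (rule perturbed_deriv_of_primitive[where p = "\<lambda>_. 0"])
     (use inner_has_integral_primitive_interval[OF x_primitive] continuous_x' norm_g_integrable_on in auto)

lemma perturbed_deriv_x': "0 \<le> a \<Longrightarrow> perturbed_deriv g x' accel (\<lambda>_. 1) a b"
  by (rule perturbed_deriv_of_primitive[where p = g])
     (use x'_has_integral_accel continuous_trajectory(4) norm_g_integrable_on in auto)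

lemma perturbed_deriv_Phi_x:
  assumes "0 \<le> a"
  shows "perturbed_deriv g (\<lambda>t. \<Phi> (x t) - \<Phi> xmin) (\<lambda>t. gradPhi (x t) \<bullet> x' t) (\<lambda>_. 0) a b"
proof (rule perturbed_deriv_of_has_real_derivative)
  fix \<tau> assume \<tau>: "\<tau> \<in> {a..b}"
  have "(x has_vector_derivative x' \<tau>) (at \<tau> within {a..b})"
    by (rule has_vector_derivative_inner_primitive[OF inner_has_integral_primitive_interval[OF x_primitive]])
       (use assms \<tau> continuous_x' in auto)
  then have "(x has_derivative (\<lambda>h. h *\<^sub>R x' \<tau>)) (at \<tau> within {a..b})"
    by (simp add: has_vector_derivative_def)
  from has_derivative_compose[OF this grad]
  have "((\<lambda>t. \<Phi> (x t) - \<Phi> xmin) has_derivative (\<lambda>h. gradPhi (x \<tau>) \<bullet> (h *\<^sub>R x' \<tau>) - 0)) (at \<tau> within {a..b})"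
    by (intro has_derivative_diff has_derivative_const) (simp add: o_def)
  moreover have "(\<lambda>h. gradPhi (x \<tau>) \<bullet> (h *\<^sub>R x' \<tau>) - 0) = (*) (gradPhi (x \<tau>) \<bullet> x' \<tau>)"
    by (auto simp: mult.commute)
  ultimately show "((\<lambda>t. \<Phi> (x t) - \<Phi> xmin) has_real_derivative gradPhi (x \<tau>) \<bullet> x' \<tau>) (at \<tau> within {a..b})"
    by (simp add: has_field_derivative_def)
qed (use assms continuous_trajectory(1) continuous_x' norm_g_integrable_on in \<open>auto intro: continuous_intros\<close>)

section \<open>The Lyapunov function\<close>

definition beta :: "real \<Rightarrow> real" where "beta t = (1 + t) powr \<nu>"
definition beta' :: "real \<Rightarrow> real" where "beta' t = \<nu> * (1 + t) powr (\<nu> - 1)"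
definition beta2 :: "real \<Rightarrow> real" where "beta2 t = (1 + t) powr (2 * \<nu>)"
definition beta2' :: "real \<Rightarrow> real" where "beta2' t = 2 * \<nu> * (1 + t) powr (2 * \<nu> - 1)"
definition lam :: "real \<Rightarrow> real" where "lam t = (2 * \<nu> + 1) * (1 + t) powr (\<nu> - 1)"
definition lam' :: "real \<Rightarrow> real" where "lam' t = (2 * \<nu> + 1) * ((\<nu> - 1) * (1 + t) powr (\<nu> - 1 - 1))"
text \<open>\<open>\<xi>\<close> is chosen so that the \<open>y \<bullet> x'\<close> term of \<open>lyap'\<close> cancels, see \<open>cross_coefficient_eq_0\<close>.\<close>

definition xi :: "real \<Rightarrow> real" where
  "xi t = ((2 * \<nu> + 1) * c / 2) * (1 + t) powr (2 * \<nu> - 1 - \<alpha>)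
          + (- (2 * \<nu> + 1) * (2 * \<nu>)) * (1 + t) powr (2 * \<nu> - 2)"
definition xi' :: "real \<Rightarrow> real" where
  "xi' t = ((2 * \<nu> + 1) * c / 2) * ((2 * \<nu> - 1 - \<alpha>) * (1 + t) powr (2 * \<nu> - 1 - \<alpha> - 1))
           + (- (2 * \<nu> + 1) * (2 * \<nu>)) * ((2 * \<nu> - 2) * (1 + t) powr (2 * \<nu> - 2 - 1))"

lemma beta_pos: "0 \<le> t \<Longrightarrow> 0 < beta t" by (simp add: beta_def)

lemma beta2_eq: "beta2 t = beta t * beta t"
  by (simp add: beta2_def beta_def powr_add[symmetric])

lemma continuous_coefficients:
  assumes "0 \<le> a"
  shows "continuous_on {a..b} beta" "continuous_on {a..b} beta'" "continuous_on {a..b} beta2"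
    "continuous_on {a..b} beta2'" "continuous_on {a..b} lam" "continuous_on {a..b} lam'"
    "continuous_on {a..b} xi" "continuous_on {a..b} xi'"
  using assms unfolding beta_def beta'_def beta2_def beta2'_def lam_def lam'_def xi_def xi'_def
  by (auto intro!: continuous_intros)

lemma perturbed_deriv_coefficients:
  assumes "0 \<le> a"
  shows "perturbed_deriv g beta beta' (\<lambda>_. 0) a b" "perturbed_deriv g beta2 beta2' (\<lambda>_. 0) a b"
    "perturbed_deriv g lam lam' (\<lambda>_. 0) a b" "perturbed_deriv g xi xi' (\<lambda>_. 0) a b"
proof -
  note powr = perturbed_deriv_powr[OF assms norm_g_integrable_on[OF assms]]
  show "perturbed_deriv g beta beta' (\<lambda>_. 0) a b"
    by (rule perturbed_deriv_cong[OF powr[of 1 \<nu>]]) (auto simp: beta_def beta'_def)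
  show "perturbed_deriv g beta2 beta2' (\<lambda>_. 0) a b"
    by (rule perturbed_deriv_cong[OF powr[of 1 "2 * \<nu>"]]) (auto simp: beta2_def beta2'_def)
  show "perturbed_deriv g lam lam' (\<lambda>_. 0) a b"
    by (rule perturbed_deriv_cong[OF powr[of "2 * \<nu> + 1" "\<nu> - 1"]]) (auto simp: lam_def lam'_def)
  show "perturbed_deriv g xi xi' (\<lambda>_. 0) a b"
    by (rule perturbed_deriv_cong[OF perturbed_deriv_add[OF powr[of "(2 * \<nu> + 1) * c / 2" "2 * \<nu> - 1 - \<alpha>"]
          powr[of "- (2 * \<nu> + 1) * (2 * \<nu>)" "2 * \<nu> - 2"]]])
       (auto simp: xi_def xi'_def)
qed

definition y :: "real \<Rightarrow> 'a" where "y t = x t - xmin"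
definition gap :: "real \<Rightarrow> real" where "gap t = \<Phi> (x t) - \<Phi> xmin"
definition v :: "real \<Rightarrow> 'a" where "v t = lam t *\<^sub>R y t + beta t *\<^sub>R x' t"
definition v' :: "real \<Rightarrow> 'a" where
  "v' t = lam' t *\<^sub>R y t + lam t *\<^sub>R x' t + beta' t *\<^sub>R x' t + beta t *\<^sub>R accel t"

definition lyap :: "real \<Rightarrow> real" where
  "lyap t = beta2 t * gap t + (1/2) * (v t \<bullet> v t) + xi t * (y t \<bullet> y t)"
definition lyap' :: "real \<Rightarrow> real" where
  "lyap' t = beta2' t * gap t + beta2 t * (gradPhi (x t) \<bullet> x' t) + v' t \<bullet> v t
             + xi' t * (y t \<bullet> y t) + 2 * xi t * (y t \<bullet> x' t)"

lemma gap_nonneg: "0 \<le> gap t" using xmin_le by (simp add: gap_def)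

lemma continuous_lyap_terms:
  assumes "0 \<le> a"
  shows "continuous_on {a..b} y" "continuous_on {a..b} gap" "continuous_on {a..b} v"
    "continuous_on {a..b} v'" "continuous_on {a..b} lyap"
  using assms continuous_x continuous_x' continuous_trajectory continuous_coefficients
  unfolding y_def gap_def v_def v'_def lyap_def
  by (auto intro!: continuous_intros)

lemma perturbed_deriv_y: "0 \<le> a \<Longrightarrow> perturbed_deriv g y x' (\<lambda>_. 0) a b"
  by (rule perturbed_deriv_cong[OF perturbed_deriv_add_const[OF perturbed_deriv_x, where k = "- xmin"]])
     (auto simp: y_def)

lemma perturbed_deriv_v:
  assumes "0 \<le> a"
  shows "perturbed_deriv g v v' beta a b"
proof -
  note coeff = perturbed_deriv_coefficients[OF assms] and cont = continuous_coefficients[OF assms]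
  have "perturbed_deriv g (\<lambda>t. lam t *\<^sub>R y t + beta t *\<^sub>R x' t)
      (\<lambda>t. (lam' t *\<^sub>R y t + lam t *\<^sub>R x' t) + (beta' t *\<^sub>R x' t + beta t *\<^sub>R accel t))
      (\<lambda>t. (0 * norm (y t) + norm (lam t) * 0) + (0 * norm (x' t) + norm (beta t) * 1)) a b"
    by (intro perturbed_deriv_add perturbed_deriv_bilinear[OF bounded_bilinear_scaleR norm_scaleR_le]
          coeff perturbed_deriv_y perturbed_deriv_x' cont continuous_lyap_terms continuous_x'
          continuous_on_const norm_g_integrable_on assms)
  then show ?thesis
    by (rule perturbed_deriv_cong)
       (use assms beta_pos in \<open>auto simp: v_def v'_def algebra_simps abs_of_pos\<close>)
qed

lemma perturbed_deriv_lyap: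
  assumes "0 \<le> a"
  shows "perturbed_deriv g lyap lyap' (\<lambda>t. beta t * norm (v t)) a b"
proof -
  note coeff = perturbed_deriv_coefficients[OF assms] and cont = continuous_coefficients[OF assms]
    and terms = continuous_lyap_terms[OF assms]
  note inner = perturbed_deriv_bilinear[OF bounded_bilinear_inner norm_inner_le]
    and mult = perturbed_deriv_bilinear[OF bounded_bilinear_mult norm_mult_le]
  have vv: "perturbed_deriv g (\<lambda>t. v t \<bullet> v t) (\<lambda>t. v' t \<bullet> v t + v t \<bullet> v' t)
      (\<lambda>t. beta t * norm (v t) + norm (v t) * beta t) a b"
    by (intro inner perturbed_deriv_v terms cont norm_g_integrable_on assms)
  have yy: "perturbed_deriv g (\<lambda>t. y t \<bullet> y t) (\<lambda>t. x' t \<bullet> y t + y t \<bullet> x' t)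
      (\<lambda>t. 0 * norm (y t) + norm (y t) * 0) a b"
    by (intro inner perturbed_deriv_y terms continuous_x' continuous_on_const norm_g_integrable_on assms)
  have "perturbed_deriv g (\<lambda>t. beta2 t * gap t + (1/2) * (v t \<bullet> v t) + xi t * (y t \<bullet> y t))
      (\<lambda>t. (beta2' t * gap t + beta2 t * (gradPhi (x t) \<bullet> x' t))
         + (0 * (v t \<bullet> v t) + (1/2) * (v' t \<bullet> v t + v t \<bullet> v' t))
         + (xi' t * (y t \<bullet> y t) + xi t * (x' t \<bullet> y t + y t \<bullet> x' t)))
      (\<lambda>t. (0 * norm (gap t) + norm (beta2 t) * 0)
         + (0 * norm (v t \<bullet> v t) + norm (1/2::real) * (beta t * norm (v t) + norm (v t) * beta t))
         + (0 * norm (y t \<bullet> y t) + norm (xi t) * (0 * norm (y t) + norm (y t) * 0))) a b"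
    by (intro perturbed_deriv_add mult coeff vv yy perturbed_deriv_const
          perturbed_deriv_Phi_x[OF assms, folded gap_def[abs_def]] cont terms continuous_on_const
          norm_g_integrable_on assms continuous_intros)
  then show ?thesis
    by (rule perturbed_deriv_cong)
       (use assms beta_pos in \<open>auto simp: lyap_def lyap'_def inner_commute algebra_simps abs_of_pos\<close>)
qed

text \<open>
  For \<open>t \<ge> T0\<close> we have \<open>(1 + t)\<^sup>1\<^sup>-\<^sup>\<alpha> \<ge> K_large\<close>, which absorbs all lower-order terms of
  the coefficients below.
\<close>

definition K_lyap :: real where "K_lyap = 12 / c"
definition K_large :: real where
  "K_large = (2 * (3 * \<nu> + 1) + 8 * \<nu>) / c + 24 / (c * (1 - \<alpha>)) + 1"
definition T0 :: real where "T0 = K_large powr (1 / (1 - \<alpha>))"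

lemma K_large_ge:
  shows "1 \<le> K_large" "2 * (3 * \<nu> + 1) / c \<le> K_large" "8 * \<nu> / c \<le> K_large"
    "24 / (c * (1 - \<alpha>)) \<le> K_large"
proof -
  have a: "0 \<le> 2 * (3 * \<nu> + 1) / c" "0 \<le> 8 * \<nu> / c" "0 \<le> 24 / (c * (1 - \<alpha>))"
    using nu_ge_0 c_pos alpha by auto
  have "(2 * (3 * \<nu> + 1) + 8 * \<nu>) / c = 2 * (3 * \<nu> + 1) / c + 8 * \<nu> / c"
    by (simp add: add_divide_distrib)
  then show "1 \<le> K_large" "2 * (3 * \<nu> + 1) / c \<le> K_large" "8 * \<nu> / c \<le> K_large"
    "24 / (c * (1 - \<alpha>)) \<le> K_large"
    using a unfolding K_large_def by linarith+
qed

lemma T0_ge_1: "1 \<le> T0"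
  unfolding T0_def using K_large_ge(1) alpha by (intro ge_one_powr_ge_zero) auto

lemma K_large_le:
  assumes "T0 \<le> t"
  shows "K_large \<le> (1 + t) powr (1 - \<alpha>)"
proof -
  have "T0 powr (1 - \<alpha>) = K_large"
    unfolding T0_def using K_large_ge(1) alpha by (simp add: powr_powr)
  moreover have "T0 powr (1 - \<alpha>) \<le> (1 + t) powr (1 - \<alpha>)"
    using assms T0_ge_1 alpha by (intro powr_mono2) auto
  ultimately show ?thesis by simp
qed

lemma beta2'_minus_lam_beta: "0 \<le> t \<Longrightarrow> beta2' t - lam t * beta t = - ((1 + t) powr (2 * \<nu> - 1))"
proof -
  assume t: "0 \<le> t"
  have "(1 + t) powr (\<nu> - 1) * (1 + t) powr \<nu> = (1 + t) powr (2 * \<nu> - 1)" by (rule powr_add_eq) simp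
  then show ?thesis unfolding beta2'_def lam_def beta_def by (simp add: algebra_simps)
qed

lemma x'_coefficient_le:
  assumes "T0 \<le> t"
  shows "beta t * (lam t + beta' t - beta t * damping t) \<le> - (c / 2) * (1 + t) powr (2 * \<nu> - \<alpha>)"
proof -
  define u where "u = 1 + t"
  have u: "1 \<le> u" using assms T0_ge_1 by (simp add: u_def)
  define B where "B = u powr \<nu>"
  define A where "A = u powr (\<nu> - 1)"
  define Gi where "Gi = 1 / u powr \<alpha>"
  define P where "P = u powr (2 * \<nu> - 1)"
  define R where "R = u powr (2 * \<nu> - \<alpha>)"
  define U where "U = u powr (1 - \<alpha>)"
  have e1: "B * A = P" unfolding A_def B_def P_def by (rule powr_add_eq) simp
  have e2: "B * B * Gi = R"
    unfolding B_def Gi_def R_def using u by (simp add: powr_add_eq powr_diff)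
  have e3: "P * U = R" unfolding P_def U_def R_def by (rule powr_add_eq) simp
  have P0: "0 \<le> P" by (simp add: P_def)
  have L: "beta t * (lam t + beta' t - beta t * damping t) = (2 * \<nu> + 1) * (B * A) + \<nu> * (B * A) - c * (B * B * Gi)"
    unfolding beta_def lam_def beta'_def damping_def u_def[symmetric] A_def B_def Gi_def by (simp add: algebra_simps)
  have K: "2 * (3 * \<nu> + 1) / c \<le> U" using K_large_le[OF assms] K_large_ge(2) by (simp add: u_def U_def)
  then have "(3 * \<nu> + 1) \<le> (c / 2) * U" using c_pos by (simp add: field_simps)
  then have "(3 * \<nu> + 1) * P \<le> ((c / 2) * U) * P" using P0 by (rule mult_right_mono)
  also have "\<dots> = (c / 2) * (P * U)" by (simp add: algebra_simps)
  also have "\<dots> = (c / 2) * R" by (simp add: e3)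
  finally have "(3 * \<nu> + 1) * P \<le> (c / 2) * R" .
  then show ?thesis unfolding L e1 e2 u_def[symmetric] R_def[symmetric] by (simp add: algebra_simps)
qed

lemma y_coefficient_le:
  assumes "0 \<le> t"
  shows "lam t * lam' t + xi' t \<le> 3 * (1 + t) powr (2 * \<nu> - 3)"
proof -
  define u where "u = 1 + t"
  define k where "k = 2 * \<nu> + 1"
  define A where "A = u powr (\<nu> - 1)"
  define S where "S = u powr (\<nu> - 1 - 1)"
  define Q where "Q = u powr (2 * \<nu> - 3)"
  define R where "R = u powr (2 * \<nu> - 1 - \<alpha> - 1)"
  have e1: "A * S = Q" unfolding A_def S_def Q_def by (rule powr_add_eq) simp
  have e2: "u powr (2 * \<nu> - 2 - 1) = Q" unfolding Q_def by simp
  have L: "lam t * lam' t + xi' t = k * (k * (\<nu> - 1)) * (A * S) + (k * c / 2) * (2 * \<nu> - 1 - \<alpha>) * R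
       + (- k * (2 * \<nu>)) * (2 * \<nu> - 2) * u powr (2 * \<nu> - 2 - 1)"
    unfolding lam_def lam'_def xi'_def u_def[symmetric] k_def[symmetric] A_def S_def R_def by (simp add: algebra_simps)
  have L2: "lam t * lam' t + xi' t = (k * c / 2) * (2 * \<nu> - 1 - \<alpha>) * R + k * (\<nu> - 1) * (1 - 2 * \<nu>) * Q"
    unfolding L e1 e2 by (simp add: k_def algebra_simps)
  have A0: "(k * c / 2) * (2 * \<nu> - 1 - \<alpha>) * R \<le> 0"
  proof -
    have "0 \<le> k * c / 2" using nu_ge_0 c_pos by (simp add: k_def)
    moreover have "2 * \<nu> - 1 - \<alpha> \<le> 0" using nu by simp
    ultimately have "(k * c / 2) * (2 * \<nu> - 1 - \<alpha>) \<le> 0" by (simp add: mult_nonneg_nonpos)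
    then show ?thesis by (simp add: mult_nonpos_nonneg R_def)
  qed
  have B: "k * (\<nu> - 1) * (1 - 2 * \<nu>) \<le> 3"
    unfolding k_def by (rule cubic_le_3[OF nu_ge_0 nu_less_1])
  have "k * (\<nu> - 1) * (1 - 2 * \<nu>) * Q \<le> 3 * Q"
    using B by (intro mult_right_mono) (auto simp: Q_def)
  then show ?thesis unfolding L2 u_def[symmetric] Q_def[symmetric] using A0 by linarith
qed

lemma cross_coefficient_eq_0:
  assumes "0 \<le> t"
  shows "lam t * (lam t + beta' t - beta t * damping t) + beta t * lam' t + 2 * xi t = 0"
proof -
  define u where "u = 1 + t"
  have u: "1 \<le> u" using assms by (simp add: u_def)
  define k where "k = 2 * \<nu> + 1"
  define A where "A = u powr (\<nu> - 1)"
  define B where "B = u powr \<nu>"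
  define S where "S = u powr (\<nu> - 1 - 1)"
  define Gi where "Gi = 1 / u powr \<alpha>"
  define Q where "Q = u powr (2 * \<nu> - 2)"
  define R where "R = u powr (2 * \<nu> - 1 - \<alpha>)"
  have e1: "A * A = Q" unfolding A_def Q_def by (rule powr_add_eq) simp
  have e2: "B * S = Q" unfolding B_def S_def Q_def by (rule powr_add_eq) simp
  have e3: "A * B * Gi = R" unfolding A_def B_def Gi_def R_def using u by (simp add: powr_add_eq powr_diff)
  have L: "lam t * (lam t + beta' t - beta t * damping t) + beta t * lam' t + 2 * xi t
     = k * k * (A * A) + k * \<nu> * (A * A) - k * c * (A * B * Gi) + k * (\<nu> - 1) * (B * S)
       + k * c * R - 4 * k * \<nu> * Q"
    unfolding lam_def lam'_def beta'_def beta_def damping_def xi_def u_def[symmetric] k_def[symmetric]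
      A_def B_def S_def Gi_def Q_def R_def by (simp add: algebra_simps)
  show ?thesis unfolding L e1 e2 e3 by (simp add: k_def algebra_simps)
qed

lemma xi_lower_bound:
  assumes "T0 \<le> t"
  shows "(c / 4) * (1 + t) powr (2 * \<nu> - 1 - \<alpha>) \<le> xi t"
proof -
  define u where "u = 1 + t"
  define k where "k = 2 * \<nu> + 1"
  define Q where "Q = u powr (2 * \<nu> - 2)"
  define R where "R = u powr (2 * \<nu> - 1 - \<alpha>)"
  define U where "U = u powr (1 - \<alpha>)"
  have e: "Q * U = R" unfolding Q_def U_def R_def by (rule powr_add_eq) simp
  have Q0: "0 \<le> Q" "0 \<le> R" by (simp_all add: Q_def R_def)
  have K: "8 * \<nu> / c \<le> U" using K_large_le[OF assms] K_large_ge(3) by (simp add: u_def U_def)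
  then have "2 * \<nu> \<le> (c / 4) * U" using c_pos by (simp add: field_simps)
  then have "(2 * \<nu>) * Q \<le> ((c / 4) * U) * Q" using Q0(1) by (rule mult_right_mono)
  also have "\<dots> = (c / 4) * (Q * U)" by (simp add: algebra_simps)
  also have "\<dots> = (c / 4) * R" by (simp add: e)
  finally have "(2 * \<nu>) * Q \<le> (c / 4) * R" .
  then have A: "k * ((2 * \<nu>) * Q) \<le> k * ((c / 4) * R)" using nu_ge_0 by (intro mult_left_mono) (auto simp: k_def)
  have H: "xi t = (k * c / 2) * R - k * (2 * \<nu>) * Q"
    unfolding xi_def k_def[symmetric] u_def[symmetric] R_def Q_def by (simp add: algebra_simps)
  have "(c / 4) * R \<le> k * ((c / 4) * R)"
    using nu_ge_0 c_pos Q0 by (intro mult_right_mono[of 1 k, simplified]) (auto simp: k_def)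
  then show ?thesis unfolding u_def[symmetric] R_def[symmetric] H using A by (simp add: algebra_simps)
qed

lemma T0_nonneg: "0 \<le> T0" using T0_ge_1 by simp

lemma xi_nonneg: "T0 \<le> t \<Longrightarrow> 0 \<le> xi t"
  using xi_lower_bound[of t] c_pos by (smt (verit) powr_ge_zero zero_le_divide_iff mult_nonneg_nonneg)

lemma lyap_ge:
  assumes "T0 \<le> t"
  shows "0 \<le> lyap t" "(1/2) * (norm (v t))\<^sup>2 \<le> lyap t" "xi t * (norm (y t))\<^sup>2 \<le> lyap t"
proof -
  have "0 \<le> beta2 t * gap t" using gap_nonneg by (simp add: beta2_def)
  moreover have "0 \<le> xi t * (y t \<bullet> y t)" using xi_nonneg[OF assms] by simp
  ultimately show "0 \<le> lyap t" "(1/2) * (norm (v t))\<^sup>2 \<le> lyap t" "xi t * (norm (y t))\<^sup>2 \<le> lyap t"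
    by (auto simp: lyap_def power2_norm_eq_inner)
qed

definition dissipation :: "real \<Rightarrow> real" where
  "dissipation t = (1 + t) powr (2 * \<nu> - 1) * gap t + (c / 2) * (1 + t) powr (2 * \<nu> - \<alpha>) * (norm (x' t))\<^sup>2"

lemma dissipation_nonneg: "0 \<le> dissipation t"
  unfolding dissipation_def using gap_nonneg c_pos by (intro add_nonneg_nonneg mult_nonneg_nonneg) auto

lemma continuous_dissipation: "0 \<le> a \<Longrightarrow> continuous_on {a..b} dissipation"
  unfolding dissipation_def using continuous_lyap_terms(2) continuous_x' by (intro continuous_intros) auto

lemma lyap'_le:
  assumes T: "T0 \<le> t"
  shows "lyap' t \<le> - dissipation t + K_lyap * (1 + t) powr (\<alpha> - 2) * lyap t"
proof -
  have t0: "0 \<le> t" using T T0_ge_1 by simp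
  have "gap t \<le> y t \<bullet> gradPhi (x t)" using gap_le_inner_grad[of "x t"] by (simp add: gap_def y_def)
  moreover have "0 \<le> lam t * beta t" using t0 nu_ge_0 by (simp add: lam_def beta_def)
  ultimately have "lyap' t \<le> (beta2' t - lam t * beta t) * gap t
        + beta t * (lam t + beta' t - beta t * damping t) * (x' t \<bullet> x' t)
        + (lam t * lam' t + xi' t) * (y t \<bullet> y t)
        + (lam t * (lam t + beta' t - beta t * damping t) + beta t * lam' t + 2 * xi t) * (y t \<bullet> x' t)"
    unfolding lyap'_def v'_def v_def accel_def beta2_eq by (rule lyap_rate_algebra)
  moreover have "beta t * (lam t + beta' t - beta t * damping t) * (x' t \<bullet> x' t)
      \<le> - (c / 2) * (1 + t) powr (2 * \<nu> - \<alpha>) * (norm (x' t))\<^sup>2"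
    using mult_right_mono[OF x'_coefficient_le[OF T], of "x' t \<bullet> x' t"] by (simp add: power2_norm_eq_inner)
  moreover have "(lam t * lam' t + xi' t) * (y t \<bullet> y t) \<le> K_lyap * (1 + t) powr (\<alpha> - 2) * lyap t"
  proof -
    have "(lam t * lam' t + xi' t) * (y t \<bullet> y t) \<le> 3 * (1 + t) powr (2 * \<nu> - 3) * (y t \<bullet> y t)"
      using y_coefficient_le[OF t0] by (simp add: mult_right_mono)
    also have "3 * (1 + t) powr (2 * \<nu> - 3) = K_lyap * (1 + t) powr (\<alpha> - 2) * ((c / 4) * (1 + t) powr (2 * \<nu> - 1 - \<alpha>))"
      using powr_add_eq[of "\<alpha> - 2" "2 * \<nu> - 1 - \<alpha>" "2 * \<nu> - 3" "1 + t"] c_pos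
      by (simp add: K_lyap_def field_simps)
    also have "\<dots> * (y t \<bullet> y t) \<le> K_lyap * (1 + t) powr (\<alpha> - 2) * xi t * (y t \<bullet> y t)"
      using xi_lower_bound[OF T] c_pos by (intro mult_right_mono mult_left_mono) (auto simp: K_lyap_def)
    also have "\<dots> \<le> K_lyap * (1 + t) powr (\<alpha> - 2) * lyap t"
      using mult_left_mono[OF lyap_ge(3)[OF T], of "K_lyap * (1 + t) powr (\<alpha> - 2)"] c_pos
      by (simp add: K_lyap_def power2_norm_eq_inner mult.assoc)
    finally show ?thesis .
  qed
  ultimately show ?thesis
    using beta2'_minus_lam_beta[OF t0] cross_coefficient_eq_0[OF t0] unfolding dissipation_def by simp
qed

lemma perturbed_upper_deriv_lyap:
  assumes "T0 \<le> a"
  shows "perturbed_upper_deriv g lyap (\<lambda>t. - dissipation t + K_lyap * (1 + t) powr (\<alpha> - 2) * lyap t)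
           (\<lambda>t. beta t * norm (v t)) a b"
proof -
  have "0 \<le> a" using assms T0_nonneg by linarith
  show ?thesis
    by (rule perturbed_upper_deriv_mono[OF perturbed_deriv_imp_upper[OF perturbed_deriv_lyap[OF \<open>0 \<le> a\<close>]]])
       (use lyap'_le assms norm_g_integrable_on[OF \<open>0 \<le> a\<close>] in auto)
qed

definition G_nu :: real where "G_nu = integral {0..} (\<lambda>t. (1 + t) powr \<nu> * norm (g t))"

lemma G_nu_ge: "0 \<le> a \<Longrightarrow> integral {a..b} (\<lambda>t. (1 + t) powr \<nu> * norm (g t)) \<le> G_nu"
  unfolding G_nu_def by (intro integral_subset_le g_weighted_integrable_on g_weighted) auto

lemma G_nu_nonneg: "0 \<le> G_nu"
  unfolding G_nu_def by (intro integral_nonneg g_weighted) auto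

lemma K_lyap_small: "K_lyap * ((1 + T0) powr (\<alpha> - 1) / (1 - \<alpha>)) \<le> 1 / 2"
proof -
  have K: "24 / (c * (1 - \<alpha>)) \<le> (1 + T0) powr (1 - \<alpha>)"
    using K_large_le[of T0] K_large_ge(4) by simp
  have p: "(1 + T0) powr (\<alpha> - 1) = 1 / (1 + T0) powr (1 - \<alpha>)"
    using T0_ge_1 by (simp add: powr_minus_divide[symmetric] powr_minus)
  have pos: "0 < (1 + T0) powr (1 - \<alpha>)" using T0_ge_1 by simp
  have "K_lyap * ((1 + T0) powr (\<alpha> - 1) / (1 - \<alpha>)) = 12 / (c * (1 - \<alpha>) * (1 + T0) powr (1 - \<alpha>))"
    unfolding p K_lyap_def by (simp add: field_simps)
  also have "\<dots> \<le> 12 / (c * (1 - \<alpha>) * (24 / (c * (1 - \<alpha>))))"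
    using K c_pos alpha pos by (intro divide_left_mono mult_left_mono mult_pos_pos) auto
  also have "\<dots> = 1 / 2" using c_pos alpha by (simp add: field_simps)
  finally show ?thesis .
qed

lemma integral_lyap_growth_le:
  assumes "T0 \<le> s" "0 \<le> M" and M: "\<And>\<tau>. \<tau> \<in> {T0..s} \<Longrightarrow> lyap \<tau> \<le> M"
  shows "integral {T0..s} (\<lambda>\<tau>. K_lyap * (1 + \<tau>) powr (\<alpha> - 2) * lyap \<tau>) \<le> M / 2"
proof -
  have "integral {T0..s} (\<lambda>\<tau>. K_lyap * (1 + \<tau>) powr (\<alpha> - 2) * lyap \<tau>)
      \<le> integral {T0..s} (\<lambda>\<tau>. (K_lyap * M) * (1 + \<tau>) powr (\<alpha> - 2))"
  proof (rule integral_le)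
    show "(\<lambda>\<tau>. K_lyap * (1 + \<tau>) powr (\<alpha> - 2) * lyap \<tau>) integrable_on {T0..s}"
      "(\<lambda>\<tau>. (K_lyap * M) * (1 + \<tau>) powr (\<alpha> - 2)) integrable_on {T0..s}"
      using T0_nonneg continuous_lyap_terms(5)[OF T0_nonneg]
      by (auto intro!: integrable_continuous_real continuous_intros)
    fix \<tau> assume "\<tau> \<in> {T0..s}"
    then show "K_lyap * (1 + \<tau>) powr (\<alpha> - 2) * lyap \<tau> \<le> (K_lyap * M) * (1 + \<tau>) powr (\<alpha> - 2)"
      using mult_left_mono[OF M, of \<tau> "K_lyap * (1 + \<tau>) powr (\<alpha> - 2)"] c_pos
      by (simp add: K_lyap_def algebra_simps)
  qed
  also have "\<dots> = (K_lyap * M) * integral {T0..s} (\<lambda>\<tau>. (1 + \<tau>) powr (\<alpha> - 2))" by simp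
  also have "\<dots> \<le> (K_lyap * M) * ((1 + T0) powr (\<alpha> - 1) / (1 - \<alpha>))"
    using integral_powr_le[OF alpha(2) T0_nonneg assms(1)] assms(2) c_pos
    by (intro mult_left_mono) (auto simp: K_lyap_def)
  also have "\<dots> \<le> M * (1 / 2)"
    using mult_left_mono[OF K_lyap_small assms(2)] by (simp add: algebra_simps)
  finally show ?thesis by simp
qed

lemma integral_lyap_perturbation_le:
  assumes "T0 \<le> s" "0 \<le> M" and M: "\<And>\<tau>. \<tau> \<in> {T0..s} \<Longrightarrow> lyap \<tau> \<le> M"
  shows "integral {T0..s} (\<lambda>\<tau>. beta \<tau> * norm (v \<tau>) * norm (g \<tau>)) \<le> sqrt (2 * M) * G_nu"
proof -
  have "integral {T0..s} (\<lambda>\<tau>. beta \<tau> * norm (v \<tau>) * norm (g \<tau>))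
      \<le> integral {T0..s} (\<lambda>\<tau>. sqrt (2 * M) * ((1 + \<tau>) powr \<nu> * norm (g \<tau>)))"
  proof (rule integral_le)
    show "(\<lambda>\<tau>. beta \<tau> * norm (v \<tau>) * norm (g \<tau>)) integrable_on {T0..s}"
      using continuous_coefficients(1)[OF T0_nonneg] continuous_lyap_terms(3)[OF T0_nonneg]
      by (intro integrable_continuous_mult_norm norm_g_integrable_on T0_nonneg continuous_intros)
    show "(\<lambda>\<tau>. sqrt (2 * M) * ((1 + \<tau>) powr \<nu> * norm (g \<tau>))) integrable_on {T0..s}"
      using integrable_cmul[OF g_weighted_integrable_on[OF T0_nonneg, of s], of "sqrt (2 * M)"] by simp
    fix \<tau> assume \<tau>: "\<tau> \<in> {T0..s}"
    have "(norm (v \<tau>))\<^sup>2 \<le> 2 * M" using lyap_ge(2)[of \<tau>] M[OF \<tau>] \<tau> by auto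
    then have "norm (v \<tau>) \<le> sqrt (2 * M)" using real_le_rsqrt by blast
    then show "beta \<tau> * norm (v \<tau>) * norm (g \<tau>) \<le> sqrt (2 * M) * ((1 + \<tau>) powr \<nu> * norm (g \<tau>))"
      by (simp add: beta_def mult.commute mult.left_commute mult_left_mono)
  qed
  also have "\<dots> \<le> sqrt (2 * M) * G_nu"
    using G_nu_ge[OF T0_nonneg, of s] assms(2) by (simp add: mult_left_mono)
  finally show ?thesis .
qed

lemma lyap_integral_inequality:
  assumes "T0 \<le> s" "0 \<le> M" and "\<And>\<tau>. \<tau> \<in> {T0..s} \<Longrightarrow> lyap \<tau> \<le> M"
  shows "lyap s + integral {T0..s} dissipation \<le> lyap T0 + M / 2 + sqrt (2 * M) * G_nu"
proof -
  have "lyap s - lyap T0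
      \<le> integral {T0..s} (\<lambda>\<tau>. - dissipation \<tau> + K_lyap * (1 + \<tau>) powr (\<alpha> - 2) * lyap \<tau>)
         + integral {T0..s} (\<lambda>\<tau>. beta \<tau> * norm (v \<tau>) * norm (g \<tau>))"
  proof (rule perturbed_upper_deriv_integral_le[OF perturbed_upper_deriv_lyap[OF order_refl] assms(1)])
    show "continuous_on {T0..s} (\<lambda>\<tau>. - dissipation \<tau> + K_lyap * (1 + \<tau>) powr (\<alpha> - 2) * lyap \<tau>)"
      using continuous_dissipation[OF T0_nonneg] continuous_lyap_terms(5)[OF T0_nonneg] T0_nonneg
      by (intro continuous_intros) auto
    show "continuous_on {T0..s} (\<lambda>\<tau>. beta \<tau> * norm (v \<tau>))"
      using continuous_coefficients(1)[OF T0_nonneg] continuous_lyap_terms(3)[OF T0_nonneg]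
      by (intro continuous_intros)
  qed (rule norm_g_integrable_on[OF T0_nonneg])
  also have "integral {T0..s} (\<lambda>\<tau>. - dissipation \<tau> + K_lyap * (1 + \<tau>) powr (\<alpha> - 2) * lyap \<tau>)
      = - integral {T0..s} dissipation + integral {T0..s} (\<lambda>\<tau>. K_lyap * (1 + \<tau>) powr (\<alpha> - 2) * lyap \<tau>)"
    using continuous_dissipation continuous_lyap_terms(5) T0_nonneg
    by (subst integral_add) (auto intro!: integrable_continuous_real continuous_intros simp: integral_neg)
  finally show ?thesis
    using integral_lyap_growth_le[OF assms] integral_lyap_perturbation_le[OF assms] by linarith
qed

definition lyap_sup :: real where "lyap_sup = (2 * sqrt 2 * G_nu + sqrt (2 * lyap T0))\<^sup>2"
definition dissipation_total :: real where
  "dissipation_total = lyap T0 + lyap_sup / 2 + sqrt (2 * lyap_sup) * G_nu"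

lemma lyap_le_sup:
  assumes "T0 \<le> t"
  shows "lyap t \<le> lyap_sup"
proof -
  obtain tm where tm: "tm \<in> {T0..t}" and max: "\<And>s. s \<in> {T0..t} \<Longrightarrow> lyap s \<le> lyap tm"
    using continuous_attains_sup[of "{T0..t}" lyap] continuous_lyap_terms(5)[OF T0_nonneg] assms by auto
  have "0 \<le> lyap tm" using lyap_ge(1)[of tm] tm by simp
  have "lyap tm + integral {T0..tm} dissipation \<le> lyap T0 + lyap tm / 2 + sqrt (2 * lyap tm) * G_nu"
    by (rule lyap_integral_inequality) (use tm max \<open>0 \<le> lyap tm\<close> in auto)
  moreover have "0 \<le> integral {T0..tm} dissipation"
    using T0_nonneg by (intro integral_nonneg integrable_continuous_real continuous_dissipation dissipation_nonneg) auto
  ultimately have "lyap tm \<le> lyap T0 + lyap tm / 2 + sqrt (2 * lyap tm) * G_nu" by simp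
  then have "lyap tm \<le> lyap_sup" unfolding lyap_sup_def
    by (rule le_square_of_self_bound[OF \<open>0 \<le> lyap tm\<close> lyap_ge(1)[OF order_refl] G_nu_nonneg])
  then show ?thesis using max[of t] assms by simp
qed

lemma lyap_sup_nonneg: "0 \<le> lyap_sup" by (simp add: lyap_sup_def)

lemma integral_dissipation_le:
  assumes "T0 \<le> t"
  shows "integral {T0..t} dissipation \<le> dissipation_total"
proof -
  have "lyap t + integral {T0..t} dissipation \<le> lyap T0 + lyap_sup / 2 + sqrt (2 * lyap_sup) * G_nu"
    by (rule lyap_integral_inequality[OF assms lyap_sup_nonneg]) (use lyap_le_sup in auto)
  then show ?thesis using lyap_ge(1)[OF assms] by (simp add: dissipation_total_def)
qed

definition x'_weight :: "real \<Rightarrow> real" where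
  "x'_weight t = (1 + t) powr (2 * \<nu> - \<alpha>) * (norm (x' t))\<^sup>2"

lemma continuous_x'_weight: "0 \<le> a \<Longrightarrow> continuous_on {a..b} x'_weight"
  unfolding x'_weight_def using continuous_x' by (intro continuous_intros) auto

lemma integral_x'_weight_le:
  assumes "0 \<le> k"
  shows "integral {0..k} x'_weight \<le> integral {0..T0} x'_weight + (2 / c) * dissipation_total"
proof -
  have int: "x'_weight integrable_on {0..max k T0}"
    by (rule integrable_continuous_real[OF continuous_x'_weight]) simp
  have "integral {0..k} x'_weight \<le> integral {0..max k T0} x'_weight"
    using assms by (intro integral_subset_le int integrable_on_subinterval[OF int]) (auto simp: x'_weight_def)
  also have "\<dots> = integral {0..T0} x'_weight + integral {T0..max k T0} x'_weight"
    using Henstock_Kurzweil_Integration.integral_combine[OF _ _ int, of T0] T0_nonneg by simp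
  also have "integral {T0..max k T0} x'_weight \<le> integral {T0..max k T0} (\<lambda>t. (2 / c) * dissipation t)"
    using T0_nonneg c_pos gap_nonneg
    by (intro integral_le integrable_continuous_real continuous_x'_weight continuous_intros continuous_dissipation)
       (auto simp: x'_weight_def dissipation_def algebra_simps)
  also have "\<dots> = (2 / c) * integral {T0..max k T0} dissipation" by simp
  also have "\<dots> \<le> (2 / c) * dissipation_total"
    using integral_dissipation_le[of "max k T0"] c_pos by (intro mult_left_mono) auto
  finally show ?thesis by simp
qed

lemma x'_weight_integrable: "x'_weight integrable_on {0..}"
  by (rule integrable_on_atLeast_of_bounded_integrals[OF continuous_x'_weight _ integral_x'_weight_le])
     (auto simp: x'_weight_def)

section \<open>Decay of the energy\<close>

definition energy :: "real \<Rightarrow> real" where "energy t = (1/2) * (norm (x' t))\<^sup>2 + gap t"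
definition scaled_energy :: "real \<Rightarrow> real" where "scaled_energy t = (1 + t) powr (2 * \<nu>) * energy t"
definition w :: "real \<Rightarrow> 'a" where "w t = beta t *\<^sub>R x' t"
definition w' :: "real \<Rightarrow> 'a" where "w' t = beta' t *\<^sub>R x' t + beta t *\<^sub>R accel t"
definition scaled_energy' :: "real \<Rightarrow> real" where
  "scaled_energy' t = beta2' t * gap t + beta2 t * (gradPhi (x t) \<bullet> x' t) + w' t \<bullet> w t"

lemma continuous_energy_terms:
  assumes "0 \<le> a"
  shows "continuous_on {a..b} w" "continuous_on {a..b} w'" "continuous_on {a..b} scaled_energy"
  using assms continuous_x' continuous_trajectory continuous_coefficients continuous_lyap_terms(2)
  unfolding w_def w'_def scaled_energy_def energy_def
  by (auto intro!: continuous_intros)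

lemma perturbed_deriv_w:
  assumes "0 \<le> a"
  shows "perturbed_deriv g w w' beta a b"
proof -
  have "perturbed_deriv g (\<lambda>t. beta t *\<^sub>R x' t) (\<lambda>t. beta' t *\<^sub>R x' t + beta t *\<^sub>R accel t)
      (\<lambda>t. 0 * norm (x' t) + norm (beta t) * 1) a b"
    by (intro perturbed_deriv_bilinear[OF bounded_bilinear_scaleR norm_scaleR_le]
          perturbed_deriv_coefficients perturbed_deriv_x' continuous_coefficients continuous_x'
          continuous_on_const norm_g_integrable_on assms)
  then show ?thesis
    by (rule perturbed_deriv_cong) (use assms beta_pos in \<open>auto simp: w_def w'_def abs_of_pos\<close>)
qed

lemma perturbed_deriv_scaled_energy:
  assumes "0 \<le> a"
  shows "perturbed_deriv g scaled_energy scaled_energy' (\<lambda>t. beta t * norm (w t)) a b"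
proof -
  note cont = continuous_coefficients[OF assms] continuous_energy_terms[OF assms]
  have ww: "perturbed_deriv g (\<lambda>t. w t \<bullet> w t) (\<lambda>t. w' t \<bullet> w t + w t \<bullet> w' t)
      (\<lambda>t. beta t * norm (w t) + norm (w t) * beta t) a b"
    by (intro perturbed_deriv_bilinear[OF bounded_bilinear_inner norm_inner_le] perturbed_deriv_w
          cont norm_g_integrable_on assms)
  have sum: "perturbed_deriv g (\<lambda>t. beta2 t * gap t + (1/2) * (w t \<bullet> w t))
      (\<lambda>t. (beta2' t * gap t + beta2 t * (gradPhi (x t) \<bullet> x' t))
         + (0 * (w t \<bullet> w t) + (1/2) * (w' t \<bullet> w t + w t \<bullet> w' t)))
      (\<lambda>t. (0 * norm (gap t) + norm (beta2 t) * 0)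
         + (0 * norm (w t \<bullet> w t) + norm (1/2::real) * (beta t * norm (w t) + norm (w t) * beta t))) a b"
    by (intro perturbed_deriv_add perturbed_deriv_bilinear[OF bounded_bilinear_mult norm_mult_le]
          perturbed_deriv_coefficients ww perturbed_deriv_const
          perturbed_deriv_Phi_x[OF assms, folded gap_def[abs_def]] cont continuous_lyap_terms
          continuous_on_const norm_g_integrable_on assms continuous_intros)
  have "scaled_energy t = beta2 t * gap t + (1/2) * (w t \<bullet> w t)" for t
  proof -
    have "scaled_energy t = beta t * beta t * energy t" by (simp add: scaled_energy_def beta2_eq[symmetric] beta2_def)
    then show ?thesis by (simp add: energy_def w_def beta2_eq power2_norm_eq_inner algebra_simps)
  qed
  then show ?thesis
    by (intro perturbed_deriv_cong[OF sum]) (simp_all add: scaled_energy'_def inner_commute)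
qed

definition K_energy :: real where "K_energy = 2 * \<nu> + 2 * \<nu> / c"

lemma scaled_energy'_le:
  assumes "0 \<le> t"
  shows "scaled_energy' t \<le> K_energy * dissipation t"
proof -
  define u where "u = 1 + t"
  have "1 \<le> u" using assms by (simp add: u_def)
  have "scaled_energy' t = beta2' t * gap t + (beta' t * beta t - beta t * beta t * damping t) * (x' t \<bullet> x' t)"
    unfolding scaled_energy'_def w_def w'_def accel_def beta2_eq by (rule energy_rate_algebra)
  also have "\<dots> \<le> beta2' t * gap t + (\<nu> * u powr (2 * \<nu> - 1)) * (x' t \<bullet> x' t)"
  proof -
    have "beta' t * beta t = \<nu> * u powr (2 * \<nu> - 1)"
      using powr_add_eq[of "\<nu> - 1" \<nu> "2 * \<nu> - 1" u] unfolding beta'_def beta_def u_def by simp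
    moreover have "0 \<le> beta t * beta t * damping t" using c_pos by (simp add: beta_def damping_def)
    ultimately show ?thesis by (simp add: mult_right_mono)
  qed
  also have "\<dots> \<le> beta2' t * gap t + (\<nu> * u powr (2 * \<nu> - \<alpha>)) * (x' t \<bullet> x' t)"
    using powr_mono[of "2 * \<nu> - 1" "2 * \<nu> - \<alpha>" u] \<open>1 \<le> u\<close> alpha nu_ge_0
    by (intro add_left_mono mult_right_mono mult_left_mono) auto
  also have "\<dots> \<le> K_energy * dissipation t"
  proof -
    have "beta2' t * gap t \<le> K_energy * (u powr (2 * \<nu> - 1) * gap t)"
      using mult_right_mono[of "2 * \<nu>" K_energy "u powr (2 * \<nu> - 1) * gap t"] nu_ge_0 c_pos gap_nonneg
      unfolding beta2'_def u_def K_energy_def by (simp add: mult.assoc)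
    moreover have "\<nu> * (u powr (2 * \<nu> - \<alpha>) * (x' t \<bullet> x' t)) \<le> (K_energy * (c / 2)) * (u powr (2 * \<nu> - \<alpha>) * (x' t \<bullet> x' t))"
      using nu_ge_0 c_pos by (intro mult_right_mono) (auto simp: K_energy_def field_simps)
    ultimately show ?thesis
      unfolding dissipation_def u_def by (simp add: power2_norm_eq_inner algebra_simps)
  qed
  finally show ?thesis .
qed

lemma lam_sq_le_xi:
  assumes "T0 \<le> t"
  shows "lam t * lam t \<le> 36 / c * xi t"
proof -
  define u where "u = 1 + t"
  have "1 \<le> u" using assms T0_nonneg by (simp add: u_def)
  have "lam t * lam t = (2 * \<nu> + 1) * (2 * \<nu> + 1) * u powr (2 * \<nu> - 2)"
    using powr_add_eq[of "\<nu> - 1" "\<nu> - 1" "2 * \<nu> - 2" u] unfolding lam_def u_def by (simp add: algebra_simps)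
  also have "\<dots> \<le> 9 * u powr (2 * \<nu> - 1 - \<alpha>)"
  proof (rule mult_mono)
    show "(2 * \<nu> + 1) * (2 * \<nu> + 1) \<le> 9" using nu_ge_0 nu_less_1 mult_mono[of "2 * \<nu> + 1" 3 "2 * \<nu> + 1" 3] by simp
    show "u powr (2 * \<nu> - 2) \<le> u powr (2 * \<nu> - 1 - \<alpha>)" using \<open>1 \<le> u\<close> alpha by (intro powr_mono) auto
  qed simp_all
  also have "\<dots> = 36 / c * (c / 4 * u powr (2 * \<nu> - 1 - \<alpha>))" using c_pos by simp
  also have "\<dots> \<le> 36 / c * xi t"
    using xi_lower_bound[OF assms] c_pos by (intro mult_left_mono) (auto simp: u_def)
  finally show ?thesis .
qed

definition C_w :: real where "C_w = sqrt (2 * lyap_sup) + sqrt (36 * lyap_sup / c)"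

lemma norm_w_le:
  assumes "T0 \<le> t"
  shows "norm (w t) \<le> C_w"
proof -
  have "(norm (v t))\<^sup>2 \<le> 2 * lyap_sup" using lyap_ge(2)[OF assms] lyap_le_sup[OF assms] by linarith
  then have "norm (v t) \<le> sqrt (2 * lyap_sup)" by (rule real_le_rsqrt)
  moreover have "(norm (lam t *\<^sub>R y t))\<^sup>2 \<le> 36 * lyap_sup / c"
  proof -
    have "(norm (lam t *\<^sub>R y t))\<^sup>2 = lam t * lam t * (norm (y t))\<^sup>2" by (simp add: power2_eq_square)
    also have "\<dots> \<le> 36 / c * (xi t * (norm (y t))\<^sup>2)"
      using mult_right_mono[OF lam_sq_le_xi[OF assms], of "(norm (y t))\<^sup>2"] by simp
    also have "\<dots> \<le> 36 / c * lyap_sup"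
      using lyap_ge(3)[OF assms] lyap_le_sup[OF assms] c_pos by (intro mult_left_mono) auto
    finally show ?thesis by simp
  qed
  then have "norm (lam t *\<^sub>R y t) \<le> sqrt (36 * lyap_sup / c)" by (rule real_le_rsqrt)
  moreover have "norm (w t) \<le> norm (v t) + norm (lam t *\<^sub>R y t)"
    using norm_triangle_ineq4[of "v t" "lam t *\<^sub>R y t"] by (simp add: w_def v_def)
  ultimately show ?thesis by (simp add: C_w_def)
qed

definition energy_rate :: "real \<Rightarrow> real" where
  "energy_rate t = K_energy * dissipation t + C_w * ((1 + t) powr \<nu> * norm (g t))"

lemma energy_rate_integrable:
  assumes "0 \<le> a"
  shows "energy_rate integrable_on {a..b}"
proof -
  have "(\<lambda>t. K_energy * dissipation t) integrable_on {a..b}"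
    by (intro integrable_continuous_real continuous_intros continuous_dissipation assms)
  moreover have "(\<lambda>t. C_w * ((1 + t) powr \<nu> * norm (g t))) integrable_on {a..b}"
    using integrable_cmul[OF g_weighted_integrable_on[OF assms], of C_w] by simp
  ultimately show ?thesis unfolding energy_rate_def by (rule integrable_add)
qed

lemma scaled_energy_increment_le:
  assumes "T0 \<le> a" "a \<le> b"
  shows "scaled_energy b - scaled_energy a \<le> integral {a..b} energy_rate"
proof -
  have "0 \<le> a" using assms T0_nonneg by linarith
  have "perturbed_upper_deriv g scaled_energy (\<lambda>t. K_energy * dissipation t) (\<lambda>t. C_w * (1 + t) powr \<nu>) a b"
  proof (rule perturbed_upper_deriv_mono[OF perturbed_deriv_imp_upper[OF perturbed_deriv_scaled_energy]])
    fix t assume "t \<in> {a..b}"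
    then have "0 \<le> t" "T0 \<le> t" using assms \<open>0 \<le> a\<close> by auto
    then show "scaled_energy' t \<le> K_energy * dissipation t" "beta t * norm (w t) \<le> C_w * (1 + t) powr \<nu>"
      using scaled_energy'_le norm_w_le by (auto simp: beta_def mult.commute intro: mult_left_mono)
  qed (use \<open>0 \<le> a\<close> norm_g_integrable_on in auto)
  then have "scaled_energy b - scaled_energy a
      \<le> integral {a..b} (\<lambda>t. K_energy * dissipation t) + integral {a..b} (\<lambda>t. C_w * (1 + t) powr \<nu> * norm (g t))"
    using \<open>0 \<le> a\<close> continuous_dissipation norm_g_integrable_on assms(2)
    by (intro perturbed_upper_deriv_integral_le) (auto intro!: continuous_intros)
  also have "\<dots> = integral {a..b} energy_rate"
  proof -
    have "(\<lambda>t. K_energy * dissipation t) integrable_on {a..b}"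
      by (intro integrable_continuous_real continuous_intros continuous_dissipation \<open>0 \<le> a\<close>)
    moreover have "(\<lambda>t. C_w * (1 + t) powr \<nu> * norm (g t)) integrable_on {a..b}"
      using integrable_cmul[OF g_weighted_integrable_on[OF \<open>0 \<le> a\<close>], of C_w] by (simp add: mult.assoc)
    ultimately show ?thesis unfolding energy_rate_def by (simp add: integral_add mult.assoc)
  qed
  finally show ?thesis .
qed

definition K_log :: real where "K_log = 1 + 1 / c"

lemma scaled_energy_div_le:
  assumes "0 \<le> t"
  shows "scaled_energy t / (1 + t) \<le> K_log * dissipation t"
proof -
  define u where "u = 1 + t"
  have "1 \<le> u" using assms by (simp add: u_def)
  have "scaled_energy t / (1 + t) = (u powr (2 * \<nu>) / u) * energy t"
    unfolding scaled_energy_def u_def by simp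
  also have "\<dots> = u powr (2 * \<nu> - 1) * gap t + (1/2) * u powr (2 * \<nu> - 1) * (norm (x' t))\<^sup>2"
    using \<open>1 \<le> u\<close> unfolding energy_def by (simp add: powr_diff algebra_simps)
  also have "\<dots> \<le> u powr (2 * \<nu> - 1) * gap t + (1/2) * u powr (2 * \<nu> - \<alpha>) * (norm (x' t))\<^sup>2"
    using \<open>1 \<le> u\<close> alpha by (intro add_left_mono mult_right_mono mult_left_mono powr_mono) auto
  also have "\<dots> \<le> K_log * dissipation t"
  proof -
    have "u powr (2 * \<nu> - 1) * gap t \<le> K_log * (u powr (2 * \<nu> - 1) * gap t)"
      using mult_right_mono[of 1 K_log "u powr (2 * \<nu> - 1) * gap t"] c_pos gap_nonneg by (simp add: K_log_def)
    moreover have "1/2 \<le> K_log * (c / 2)" using c_pos by (simp add: K_log_def field_simps)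
    then have "(1/2) * u powr (2 * \<nu> - \<alpha>) * (norm (x' t))\<^sup>2 \<le> (K_log * (c / 2)) * u powr (2 * \<nu> - \<alpha>) * (norm (x' t))\<^sup>2"
      by (intro mult_right_mono) auto
    ultimately show ?thesis unfolding dissipation_def u_def by (simp add: algebra_simps)
  qed
  finally show ?thesis .
qed

definition energy_budget :: "real \<Rightarrow> real" where "energy_budget t = integral {T0..t} energy_rate"

lemma energy_budget_diff:
  assumes "T0 \<le> a" "a \<le> b"
  shows "energy_budget b - energy_budget a = integral {a..b} energy_rate"
  using Henstock_Kurzweil_Integration.integral_combine[OF assms energy_rate_integrable[OF T0_nonneg]]
  by (simp add: energy_budget_def)

lemma scaled_energy_eventually_le:
  assumes "\<epsilon> > 0"
  shows "eventually (\<lambda>t. scaled_energy t \<le> \<epsilon>) at_top"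
proof (rule eventually_le_of_log_weighted_integral_bounded[OF T0_nonneg])
  show "continuous_on {T0..b} scaled_energy" for b by (rule continuous_energy_terms(3)[OF T0_nonneg])
  show "0 \<le> scaled_energy t" for t using gap_nonneg by (simp add: scaled_energy_def energy_def)
  show "integral {T0..b} (\<lambda>\<tau>. scaled_energy \<tau> / (1 + \<tau>)) \<le> K_log * dissipation_total" if "T0 \<le> b" for b
  proof -
    have "integral {T0..b} (\<lambda>\<tau>. scaled_energy \<tau> / (1 + \<tau>)) \<le> integral {T0..b} (\<lambda>\<tau>. K_log * dissipation \<tau>)"
      using scaled_energy_div_le T0_nonneg continuous_energy_terms(3)[OF T0_nonneg] continuous_dissipation[OF T0_nonneg]
      by (intro integral_le integrable_continuous_real continuous_intros) auto
    also have "\<dots> \<le> K_log * dissipation_total"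
      using integral_dissipation_le[OF that] c_pos by (simp add: K_log_def mult_left_mono)
    finally show ?thesis .
  qed
  show "scaled_energy b - scaled_energy a \<le> energy_budget b - energy_budget a" if "T0 \<le> a" "a \<le> b" for a b
    using scaled_energy_increment_le[OF that] energy_budget_diff[OF that] by simp
  have "0 \<le> energy_rate t" for t
    unfolding energy_rate_def C_w_def K_energy_def using dissipation_nonneg nu_ge_0 c_pos lyap_sup_nonneg
    by (intro add_nonneg_nonneg mult_nonneg_nonneg) auto
  then show "energy_budget a \<le> energy_budget b" if "T0 \<le> a" "a \<le> b" for a b
    using energy_budget_diff[OF that] integral_nonneg[OF energy_rate_integrable, of a b] that T0_nonneg
    by simp
  have "energy_budget t \<le> K_energy * dissipation_total + C_w * G_nu" if "T0 \<le> t" for t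
  proof -
    have "energy_budget t = K_energy * integral {T0..t} dissipation
        + C_w * integral {T0..t} (\<lambda>\<tau>. (1 + \<tau>) powr \<nu> * norm (g \<tau>))"
    proof -
      have "(\<lambda>\<tau>. K_energy * dissipation \<tau>) integrable_on {T0..t}"
        by (intro integrable_continuous_real continuous_intros continuous_dissipation T0_nonneg)
      moreover have "(\<lambda>\<tau>. C_w * ((1 + \<tau>) powr \<nu> * norm (g \<tau>))) integrable_on {T0..t}"
        using integrable_cmul[OF g_weighted_integrable_on[OF T0_nonneg], of C_w] by simp
      ultimately show ?thesis unfolding energy_budget_def energy_rate_def by (simp add: integral_add)
    qed
    also have "\<dots> \<le> K_energy * dissipation_total + C_w * G_nu"
      using integral_dissipation_le[OF that] G_nu_ge[OF T0_nonneg] nu_ge_0 c_pos lyap_sup_nonneg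
      by (intro add_mono mult_left_mono) (auto simp: K_energy_def C_w_def)
    finally show ?thesis .
  qed
  then show "bdd_above (energy_budget ` {T0..})" by (auto intro!: bdd_aboveI)
qed (rule assms)

lemma energy_little_o: "energy \<in> o[at_top](\<lambda>t. 1 / t powr (2 * \<nu>))"
proof (rule landau_o.smallI)
  fix \<epsilon> :: real assume "\<epsilon> > 0"
  show "\<forall>\<^sub>F t in at_top. norm (energy t) \<le> \<epsilon> * norm (1 / t powr (2 * \<nu>))"
    using scaled_energy_eventually_le[OF \<open>\<epsilon> > 0\<close>] eventually_ge_at_top[of 1]
  proof eventually_elim
    case (elim t)
    have "0 \<le> energy t" using gap_nonneg by (simp add: energy_def)
    have "t powr (2 * \<nu>) \<le> (1 + t) powr (2 * \<nu>)" using elim(2) nu_ge_0 by (intro powr_mono2) auto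
    then have "t powr (2 * \<nu>) * energy t \<le> \<epsilon>"
      using elim(1) \<open>0 \<le> energy t\<close> mult_right_mono by (fastforce simp: scaled_energy_def)
    then show ?case using \<open>0 \<le> energy t\<close> elim(2) by (simp add: field_simps)
  qed
qed

end

theorem theorem2:
  fixes \<Phi> :: "'a::{real_inner, complete_space} \<Rightarrow> real"
    and gradPhi :: "'a \<Rightarrow> 'a"
    and x x' x'' g :: "real \<Rightarrow> 'a"
    and c \<alpha> \<nu> :: real
  assumes convex: "convex_on UNIV \<Phi>"
    and grad: "\<And>u. (\<Phi> has_derivative (\<lambda>h. gradPhi u \<bullet> h)) (at u)"
    and C1: "continuous_on UNIV gradPhi"
    and argmin_ne: "\<exists>v. \<forall>y. \<Phi> v \<le> \<Phi> y"
    and c_pos: "c > 0"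
    and alpha: "0 \<le> \<alpha>" "\<alpha> < 1"
    and g_L1: "g integrable_on {0..}" "(\<lambda>t. norm (g t)) integrable_on {0..}"
    and x_prim: "\<And>t. t \<ge> 0 \<Longrightarrow> (x' has_integral (x t - x 0)) {0..t}"
    and x'_prim: "\<And>t. t \<ge> 0 \<Longrightarrow> (x'' has_integral (x' t - x' 0)) {0..t}"
    and x''_loc: "\<And>T. T \<ge> 0 \<Longrightarrow> (\<lambda>t. norm (x'' t)) integrable_on {0..T}"
    and ode: "AE t in lebesgue. t \<ge> 0 \<longrightarrow>
               x'' t + (c / (1 + t) powr \<alpha>) *\<^sub>R x' t + gradPhi (x t) = g t"
    and nu: "\<alpha> \<le> \<nu>" "\<nu> \<le> (1 + \<alpha>) / 2"
    and g_weighted: "(\<lambda>t. (1 + t) powr \<nu> * norm (g t)) integrable_on {0..}"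
  shows "((\<lambda>t. (1/2) * (norm (x' t))\<^sup>2 + \<Phi> (x t) - (INF y. \<Phi> y))
            \<in> o[at_top](\<lambda>t. 1 / t powr (2 * \<nu>)))
         \<and> ((\<lambda>t. (1 + t) powr (2 * \<nu> - \<alpha>) * (norm (x' t))\<^sup>2) integrable_on {0..})"
proof -
  interpret damped_inertial_trajectory \<Phi> gradPhi x x' x'' g c \<alpha> \<nu>
    using convex grad C1 argmin_ne c_pos alpha g_L1(2) x_prim x'_prim x''_loc ode nu g_weighted
    by unfold_locales
  have "(\<lambda>t. (1/2) * (norm (x' t))\<^sup>2 + \<Phi> (x t) - (INF y. \<Phi> y)) = energy"
    by (auto simp: energy_def gap_def INF_Phi_eq)
  with energy_little_o x'_weight_integrable show ?thesis
    unfolding x'_weight_def[abs_def] by simp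
qed

end
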